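(* Let $(A\otimes V,\mu_{A\otimes V})$ be a weak crossed product with associated morphisms $\psi_V^A:V\otimes A\rightarrow A\otimes V$, $\sigma_V^A:V\otimes V\rightarrow A\otimes V$ and idempotent $\nabla_{A\otimes V}$. Let $\psi_A^V:A\otimes V\rightarrow V\otimes A$ satisfy $(V\otimes\mu_A)\circ(\psi_A^V\otimes A)\circ(A\otimes\psi_A^V)=\psi_A^V\circ(\mu_A\otimes V)$, and put $\nabla_{V\otimes A}=(V\otimes\mu_A)\circ((\psi_A^V\circ(\eta_A\otimes V))\otimes A)$. Suppose $\psi_V^A\circ\psi_A^V=\nabla_{A\otimes V}$ and $\psi_A^V\circ\psi_V^A=\nabla_{V\otimes A}$. Put $\sigma_A^V=\psi_A^V\circ\sigma_V^A:V\otimes V\rightarrow V\otimes A$ and $\mu_{V\otimes A}=(V\otimes\mu_A)\circ(\sigma_A^V\otimes\mu_A)\circ(V\otimes\psi_A^V\otimes A)$. Then $(V\otimes A,\mu_{V\otimes A})$ is a weak crossed product with associated morphisms $\psi_A^V,\sigma_A^V$, i.e. $\nabla_{V\otimes A}\circ\sigma_A^V=\sigma_A^V$, $(V\otimes\mu_A)\circ(\sigma_A^V\otimes A)\circ(V\otimes\psi_A^V)\circ(\psi_A^V\otimes V)=(V\otimes\mu_A)\circ(\psi_A^V\otimes A)\circ(A\otimes\sigma_A^V)$ (twisted condition), and $(V\otimes\mu_A)\circ(\sigma_A^V\otimes A)\circ(V\otimes\sigma_A^V)=(V\otimes\mu_A)\circ(\sigma_A^V\otimes A)\circ(V\otimes\psi_A^V)\circ(\sigma_A^V\otimes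 V)$ (cocycle condition); moreover $\mu_{V\otimes A}=\psi_A^V\circ\mu_{A\otimes V}\circ(\psi_V^A\otimes\psi_V^A)$. Furthermore, if $(A\otimes V,\mu_{A\otimes V})$ is a weak crossed product with preunit $\nu:K\rightarrow A\otimes V$, then $(V\otimes A,\mu_{V\otimes A})$ is a weak crossed product with preunit $\upsilon=\psi_A^V\circ\nu$, i.e., with $\beta_\upsilon=(V\otimes\mu_A)\circ(\upsilon\otimes A)$: $(V\otimes\mu_A)\circ(\sigma_A^V\otimes A)\circ(V\otimes\psi_A^V)\circ(\upsilon\otimes V)=\nabla_{V\otimes A}\circ(V\otimes\eta_A)$, $(V\otimes\mu_A)\circ(\sigma_A^V\otimes A)\circ(V\otimes\upsilon)=\nabla_{V\otimes A}\circ(V\otimes\eta_A)$, $(V\otimes\mu_A)\circ(\psi_A^V\otimes A)\circ(A\otimes\upsilon)=\beta_\upsilon$.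
   Context: $\mathcal C$ is a strict monoidal category with tensor product $\otimes$ and unit object $K$ in which every idempotent splits. We write $A\otimes f$ for $id_A\otimes f$. An algebra $A$ has unit $\eta_A$ and product $\mu_A$. Weak crossed products. Let $A$ be an algebra and $V$ an object, and let $\psi_V^A:V\otimes A\rightarrow A\otimes V$ satisfy $(\mu_A\otimes V)\circ(A\otimes\psi_V^A)\circ(\psi_V^A\otimes A)=\psi_V^A\circ(V\otimes\mu_A)$. Then $\nabla_{A\otimes V}=(\mu_A\otimes V)\circ(A\otimes\psi_V^A)\circ(A\otimes V\otimes\eta_A)$ is idempotent. Let $\sigma_V^A:V\otimes V\rightarrow A\otimes V$ with $\nabla_{A\otimes V}\circ\sigma_V^A=\sigma_V^A$. The twisted condition is $(\mu_A\otimes V)\circ(A\otimes\psi_V^A)\circ(\sigma_V^A\otimes A)=(\mu_A\otimes V)\circ(A\otimes\sigma_V^A)\circ(\psi_V^A\otimes V)\circ(V\otimes\psi_V^A)$ and the cocycle condition is $(\mu_A\otimes V)\circ(A\otimes\sigma_V^A)\circ(\sigma_V^A\otimes V)=(\mu_A\otimes V)\circ(A\otimes\sigma_V^A)\circ(\psi_V^A\otimes V)\circ(V\otimes\sigma_V^A)$. With $\mu_{A\otimes V}=(\mu_A\otimes V)\circ(\mu_A\otimes\sigma_V^A)\circ(A\otimes\psi_V^A\otimes V)$, if the twisted and cocycle conditions hold $(A\otimes V,\mu_{A\otimes V})$ is called a weak crossed product (with associated morphisms $\psi_V^A,\sigma_V^A$ and idempotent $\nabla_{A\otimes V}$). For $\nu:K\rightarrow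 A\otimes V$ let $\beta_\nu=(\mu_A\otimes V)\circ(A\otimes\nu)$; a weak crossed product with preunit $\nu$ is one with $(\mu_A\otimes V)\circ(A\otimes\sigma_V^A)\circ(\psi_V^A\otimes V)\circ(V\otimes\nu)=\nabla_{A\otimes V}\circ(\eta_A\otimes V)$, $(\mu_A\otimes V)\circ(A\otimes\sigma_V^A)\circ(\nu\otimes V)=\nabla_{A\otimes V}\circ(\eta_A\otimes V)$ and $(\mu_A\otimes V)\circ(A\otimes\psi_V^A)\circ(\nu\otimes A)=\beta_\nu$. *)

theory Defs
  imports Main
begin

text \<open>Cmp C g f is the composite "g after f"; TO / TM are the tensor product on
  objects / morphisms; Unit is the unit object K.\<close>

record ('o, 'm) smcat =
  Obj  :: "'o set"
  Hom  :: "'o \<Rightarrow> 'o \<Rightarrow> 'm set"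
  Cmp  :: "'m \<Rightarrow> 'm \<Rightarrow> 'm"
  Id   :: "'o \<Rightarrow> 'm"
  TO   :: "'o \<Rightarrow> 'o \<Rightarrow> 'o"
  TM   :: "'m \<Rightarrow> 'm \<Rightarrow> 'm"
  Unit :: "'o"

definition is_arr :: "('o, 'm) smcat \<Rightarrow> 'm \<Rightarrow> bool" where
  "is_arr C f \<longleftrightarrow> (\<exists>a b. f \<in> Hom C a b)"

definition strict_monoidal_category :: "('o, 'm) smcat \<Rightarrow> bool" where
  "strict_monoidal_category C \<longleftrightarrow>
     (\<forall>a b. (a \<notin> Obj C \<or> b \<notin> Obj C) \<longrightarrow> Hom C a b = {}) \<and>
     (\<forall>a b c f g. f \<in> Hom C a b \<and> g \<in> Hom C b c \<longrightarrow> Cmp C g f \<in> Hom C a c) \<and>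
     (\<forall>a \<in> Obj C. Id C a \<in> Hom C a a) \<and>
     (\<forall>a b f. f \<in> Hom C a b \<longrightarrow> Cmp C (Id C b) f = f \<and> Cmp C f (Id C a) = f) \<and>
     (\<forall>a b c d f g h. f \<in> Hom C a b \<and> g \<in> Hom C b c \<and> h \<in> Hom C c d \<longrightarrow>
        Cmp C h (Cmp C g f) = Cmp C (Cmp C h g) f) \<and>
     Unit C \<in> Obj C \<and>
     (\<forall>a \<in> Obj C. \<forall>b \<in> Obj C. TO C a b \<in> Obj C) \<and>
     (\<forall>a b c d f g. f \<in> Hom C a b \<and> g \<in> Hom C c d \<longrightarrow> TM C f g \<in> Hom C (TO C a c) (TO C b d)) \<and>
     (\<forall>a \<in> Obj C. \<forall>b \<in> Obj C. TM C (Id C a) (Id C b) = Id C (TO C a b)) \<and>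
     (\<forall>a b c a' b' c' f f' g g'. f \<in> Hom C a b \<and> f' \<in> Hom C b c \<and> g \<in> Hom C a' b' \<and> g' \<in> Hom C b' c' \<longrightarrow>
        TM C (Cmp C f' f) (Cmp C g' g) = Cmp C (TM C f' g') (TM C f g)) \<and>
     (\<forall>a \<in> Obj C. \<forall>b \<in> Obj C. \<forall>c \<in> Obj C. TO C (TO C a b) c = TO C a (TO C b c)) \<and>
     (\<forall>f g h. is_arr C f \<and> is_arr C g \<and> is_arr C h \<longrightarrow> TM C (TM C f g) h = TM C f (TM C g h)) \<and>
     (\<forall>a \<in> Obj C. TO C (Unit C) a = a \<and> TO C a (Unit C) = a) \<and>
     (\<forall>f. is_arr C f \<longrightarrow> TM C (Id C (Unit C)) f = f \<and> TM C f (Id C (Unit C)) = f)"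

definition idempotents_split :: "('o, 'm) smcat \<Rightarrow> bool" where
  "idempotents_split C \<longleftrightarrow>
     (\<forall>a e. e \<in> Hom C a a \<and> Cmp C e e = e \<longrightarrow>
        (\<exists>c p i. c \<in> Obj C \<and> p \<in> Hom C a c \<and> i \<in> Hom C c a \<and>
                 Cmp C p i = Id C c \<and> Cmp C i p = e))"

definition algebra :: "('o, 'm) smcat \<Rightarrow> 'o \<Rightarrow> 'm \<Rightarrow> 'm \<Rightarrow> bool" where
  "algebra C A eta mu \<longleftrightarrow>
     A \<in> Obj C \<and> eta \<in> Hom C (Unit C) A \<and> mu \<in> Hom C (TO C A A) A \<and>
     Cmp C mu (TM C mu (Id C A)) = Cmp C mu (TM C (Id C A) mu) \<and>
     Cmp C mu (TM C eta (Id C A)) = Id C A \<and>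
     Cmp C mu (TM C (Id C A) eta) = Id C A"

definition psi_compat :: "('o, 'm) smcat \<Rightarrow> 'o \<Rightarrow> 'o \<Rightarrow> 'm \<Rightarrow> 'm \<Rightarrow> bool" where
  "psi_compat C A V mu psi \<longleftrightarrow>
     Cmp C (TM C mu (Id C V)) (Cmp C (TM C (Id C A) psi) (TM C psi (Id C A)))
       = Cmp C psi (TM C (Id C V) mu)"

definition nablaAV :: "('o, 'm) smcat \<Rightarrow> 'o \<Rightarrow> 'o \<Rightarrow> 'm \<Rightarrow> 'm \<Rightarrow> 'm \<Rightarrow> 'm" where
  "nablaAV C A V eta mu psi =
     Cmp C (TM C mu (Id C V)) (Cmp C (TM C (Id C A) psi) (TM C (Id C (TO C A V)) eta))"

definition nablaVA :: "('o, 'm) smcat \<Rightarrow> 'o \<Rightarrow> 'o \<Rightarrow> 'm \<Rightarrow> 'm \<Rightarrow> 'm \<Rightarrow> 'm" where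
  "nablaVA C A V eta mu psi' =
     Cmp C (TM C (Id C V) mu) (TM C (Cmp C psi' (TM C eta (Id C V))) (Id C A))"

definition muAV :: "('o, 'm) smcat \<Rightarrow> 'o \<Rightarrow> 'o \<Rightarrow> 'm \<Rightarrow> 'm \<Rightarrow> 'm \<Rightarrow> 'm" where
  "muAV C A V mu psi sigma =
     Cmp C (TM C mu (Id C V)) (Cmp C (TM C mu sigma) (TM C (Id C A) (TM C psi (Id C V))))"

definition muVA :: "('o, 'm) smcat \<Rightarrow> 'o \<Rightarrow> 'o \<Rightarrow> 'm \<Rightarrow> 'm \<Rightarrow> 'm \<Rightarrow> 'm" where
  "muVA C A V mu psi' sigma' =
     Cmp C (TM C (Id C V) mu) (Cmp C (TM C sigma' mu) (TM C (Id C V) (TM C psi' (Id C A))))"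

definition twistedAV :: "('o, 'm) smcat \<Rightarrow> 'o \<Rightarrow> 'o \<Rightarrow> 'm \<Rightarrow> 'm \<Rightarrow> 'm \<Rightarrow> bool" where
  "twistedAV C A V mu psi sigma \<longleftrightarrow>
     Cmp C (TM C mu (Id C V)) (Cmp C (TM C (Id C A) psi) (TM C sigma (Id C A)))
     = Cmp C (TM C mu (Id C V)) (Cmp C (TM C (Id C A) sigma)
         (Cmp C (TM C psi (Id C V)) (TM C (Id C V) psi)))"

definition cocycleAV :: "('o, 'm) smcat \<Rightarrow> 'o \<Rightarrow> 'o \<Rightarrow> 'm \<Rightarrow> 'm \<Rightarrow> 'm \<Rightarrow> bool" where
  "cocycleAV C A V mu psi sigma \<longleftrightarrow>
     Cmp C (TM C mu (Id C V)) (Cmp C (TM C (Id C A) sigma) (TM C sigma (Id C V)))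
     = Cmp C (TM C mu (Id C V)) (Cmp C (TM C (Id C A) sigma)
         (Cmp C (TM C psi (Id C V)) (TM C (Id C V) sigma)))"

definition weak_crossed_product ::
  "('o, 'm) smcat \<Rightarrow> 'o \<Rightarrow> 'o \<Rightarrow> 'm \<Rightarrow> 'm \<Rightarrow> 'm \<Rightarrow> 'm \<Rightarrow> bool" where
  "weak_crossed_product C A V eta mu psi sigma \<longleftrightarrow>
     algebra C A eta mu \<and> V \<in> Obj C \<and>
     psi \<in> Hom C (TO C V A) (TO C A V) \<and>
     sigma \<in> Hom C (TO C V V) (TO C A V) \<and>
     psi_compat C A V mu psi \<and>
     Cmp C (nablaAV C A V eta mu psi) sigma = sigma \<and>
     twistedAV C A V mu psi sigma \<and>
     cocycleAV C A V mu psi sigma"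

definition betaAV :: "('o, 'm) smcat \<Rightarrow> 'o \<Rightarrow> 'o \<Rightarrow> 'm \<Rightarrow> 'm \<Rightarrow> 'm" where
  "betaAV C A V mu nu = Cmp C (TM C mu (Id C V)) (TM C (Id C A) nu)"

definition wcp_preunit ::
  "('o, 'm) smcat \<Rightarrow> 'o \<Rightarrow> 'o \<Rightarrow> 'm \<Rightarrow> 'm \<Rightarrow> 'm \<Rightarrow> 'm \<Rightarrow> 'm \<Rightarrow> bool" where
  "wcp_preunit C A V eta mu psi sigma nu \<longleftrightarrow>
     weak_crossed_product C A V eta mu psi sigma \<and>
     nu \<in> Hom C (Unit C) (TO C A V) \<and>
     Cmp C (TM C mu (Id C V)) (Cmp C (TM C (Id C A) sigma) (Cmp C (TM C psi (Id C V)) (TM C (Id C V) nu)))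
       = Cmp C (nablaAV C A V eta mu psi) (TM C eta (Id C V)) \<and>
     Cmp C (TM C mu (Id C V)) (Cmp C (TM C (Id C A) sigma) (TM C nu (Id C V)))
       = Cmp C (nablaAV C A V eta mu psi) (TM C eta (Id C V)) \<and>
     Cmp C (TM C mu (Id C V)) (Cmp C (TM C (Id C A) psi) (TM C nu (Id C A)))
       = betaAV C A V mu nu"

end

theory Submission
  imports Defs
begin

text \<open>Because \<open>\<psi>\<^sub>A\<^sup>V\<close> and \<open>\<psi>\<^sub>V\<^sup>A\<close> are mutually inverse up to the idempotents \<open>\<nabla>\<close>,
  every structure map of \<open>A \<otimes> V\<close> can be transported to \<open>V \<otimes> A\<close> by conjugation.
  Two local identities do the work: \<open>\<psi>\<^sub>A\<^sup>V\<close> passes through the product in the form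
  \<open>(V \<otimes> \<mu>) \<circ> (\<psi>\<^sub>A\<^sup>V \<otimes> A) = \<psi>\<^sub>A\<^sup>V \<circ> (\<mu> \<otimes> V) \<circ> (A \<otimes> \<psi>\<^sub>V\<^sup>A)\<close>, and the twisted condition
  survives conjugation in the form
  \<open>(\<mu> \<otimes> V) \<circ> (A \<otimes> \<psi>\<^sub>V\<^sup>A) \<circ> (\<sigma>\<^sub>V\<^sup>A \<otimes> A) \<circ> (V \<otimes> \<psi>\<^sub>A\<^sup>V) = (\<mu> \<otimes> V) \<circ> (A \<otimes> \<sigma>\<^sub>V\<^sup>A) \<circ> (\<psi>\<^sub>V\<^sup>A \<otimes> V)\<close>;
  both follow because every \<open>\<nabla>\<close> that appears is absorbed, by \<open>\<nabla> \<circ> \<sigma> = \<sigma>\<close>, the unit of \<open>A\<close>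
  and the compatibility of the \<open>\<psi>\<close>'s with \<open>\<mu>\<close>. Each axiom of the transposed product is
  then a rewriting of string diagrams, carried out on lists of layers so that interchange
  and strictness of \<open>\<otimes>\<close> become list manipulations.\<close>

section \<open>Strict monoidal categories\<close>

fun tensor_objs :: "('o,'m) smcat \<Rightarrow> 'o list \<Rightarrow> 'o" where
  "tensor_objs C [] = Unit C"
| "tensor_objs C [x] = x"
| "tensor_objs C (x # y # zs) = TO C x (tensor_objs C (y # zs))"

definition whisker :: "('o,'m) smcat \<Rightarrow> 'o list \<Rightarrow> 'm \<Rightarrow> 'o list \<Rightarrow> 'm" where
  "whisker C l f r = TM C (TM C (Id C (tensor_objs C l)) f) (Id C (tensor_objs C r))"

locale strict_monoidal =
  fixes C :: "('o,'m) smcat"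
  assumes smc: "strict_monoidal_category C"
begin

lemmas smc_unfolded = smc[unfolded strict_monoidal_category_def]

lemma hom_objs: "f \<in> Hom C a b \<Longrightarrow> a \<in> Obj C \<and> b \<in> Obj C"
  using smc_unfolded by (metis empty_iff)
lemma comp_hom: "f \<in> Hom C a b \<Longrightarrow> g \<in> Hom C b c \<Longrightarrow> Cmp C g f \<in> Hom C a c"
  using smc_unfolded by (auto; metis)
lemma id_hom: "a \<in> Obj C \<Longrightarrow> Id C a \<in> Hom C a a"
  using smc_unfolded by (auto; metis)
lemma comp_id_left: "f \<in> Hom C a b \<Longrightarrow> Cmp C (Id C b) f = f"
  using smc_unfolded by (auto; metis)
lemma comp_id_right: "f \<in> Hom C a b \<Longrightarrow> Cmp C f (Id C a) = f"
  using smc_unfolded by (auto; metis)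
lemma comp_assoc:
  "f \<in> Hom C a b \<Longrightarrow> g \<in> Hom C b c \<Longrightarrow> h \<in> Hom C c d \<Longrightarrow>
   Cmp C h (Cmp C g f) = Cmp C (Cmp C h g) f"
  using smc_unfolded by (auto; metis)
lemma unit_obj: "Unit C \<in> Obj C"
  using smc_unfolded by (auto; metis)
lemma tensor_obj: "a \<in> Obj C \<Longrightarrow> b \<in> Obj C \<Longrightarrow> TO C a b \<in> Obj C"
  using smc_unfolded by (auto; metis)
lemma tensor_hom: "f \<in> Hom C a b \<Longrightarrow> g \<in> Hom C c d \<Longrightarrow> TM C f g \<in> Hom C (TO C a c) (TO C b d)"
  using smc_unfolded by (auto; metis)
lemma tensor_id: "a \<in> Obj C \<Longrightarrow> b \<in> Obj C \<Longrightarrow> TM C (Id C a) (Id C b) = Id C (TO C a b)"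
  using smc_unfolded by (auto; metis)
lemma interchange:
  "f \<in> Hom C a b \<Longrightarrow> f' \<in> Hom C b c \<Longrightarrow> g \<in> Hom C a' b' \<Longrightarrow> g' \<in> Hom C b' c' \<Longrightarrow>
   TM C (Cmp C f' f) (Cmp C g' g) = Cmp C (TM C f' g') (TM C f g)"
  using smc_unfolded by (auto; metis)
lemma tensor_obj_assoc:
  "a \<in> Obj C \<Longrightarrow> b \<in> Obj C \<Longrightarrow> c \<in> Obj C \<Longrightarrow> TO C (TO C a b) c = TO C a (TO C b c)"
  using smc_unfolded by (auto; metis)
lemma tensor_assoc:
  "is_arr C f \<Longrightarrow> is_arr C g \<Longrightarrow> is_arr C h \<Longrightarrow> TM C (TM C f g) h = TM C f (TM C g h)"
  using smc_unfolded by (auto; metis)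
lemma tensor_obj_unit_left: "a \<in> Obj C \<Longrightarrow> TO C (Unit C) a = a"
  using smc_unfolded by (auto; metis)
lemma tensor_obj_unit_right: "a \<in> Obj C \<Longrightarrow> TO C a (Unit C) = a"
  using smc_unfolded by (auto; metis)
lemma tensor_unit_left: "is_arr C f \<Longrightarrow> TM C (Id C (Unit C)) f = f"
  using smc_unfolded by (auto; metis)
lemma tensor_unit_right: "is_arr C f \<Longrightarrow> TM C f (Id C (Unit C)) = f"
  using smc_unfolded by (auto; metis)

lemma is_arrI: "f \<in> Hom C a b \<Longrightarrow> is_arr C f"
  unfolding is_arr_def by blast
lemma is_arr_Id: "a \<in> Obj C \<Longrightarrow> is_arr C (Id C a)"
  by (rule is_arrI[OF id_hom])
lemma is_arr_tensor: "is_arr C f \<Longrightarrow> is_arr C g \<Longrightarrow> is_arr C (TM C f g)"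
  unfolding is_arr_def by (blast intro: tensor_hom)

lemma tensor_as_comp_left:
  assumes f: "f \<in> Hom C a b" and g: "g \<in> Hom C c d"
  shows "Cmp C (TM C (Id C b) g) (TM C f (Id C c)) = TM C f g"
proof -
  have "b \<in> Obj C" "c \<in> Obj C" using hom_objs f g by auto
  then show ?thesis
    using interchange[OF f id_hom id_hom g] comp_id_left[OF f] comp_id_right[OF g] by simp
qed

lemma tensor_as_comp_right:
  assumes f: "f \<in> Hom C a b" and g: "g \<in> Hom C c d"
  shows "Cmp C (TM C f (Id C d)) (TM C (Id C a) g) = TM C f g"
proof -
  have "a \<in> Obj C" "d \<in> Obj C" using hom_objs f g by auto
  then show ?thesis
    using interchange[OF id_hom f g id_hom] comp_id_right[OF f] comp_id_left[OF g] by simp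
qed

lemma tensor_objs_Cons: "x \<in> Obj C \<Longrightarrow> tensor_objs C (x # zs) = TO C x (tensor_objs C zs)"
  by (cases zs) (auto simp: tensor_obj_unit_right)

lemma tensor_objs_Obj: "set xs \<subseteq> Obj C \<Longrightarrow> tensor_objs C xs \<in> Obj C"
  by (induction xs) (auto simp: unit_obj tensor_obj tensor_objs_Cons)

lemma is_arr_Id_tensor_objs: "set xs \<subseteq> Obj C \<Longrightarrow> is_arr C (Id C (tensor_objs C xs))"
  by (simp add: is_arr_Id tensor_objs_Obj)

lemma tensor_objs_append:
  "set xs \<subseteq> Obj C \<Longrightarrow> set ys \<subseteq> Obj C \<Longrightarrow>
   tensor_objs C (xs @ ys) = TO C (tensor_objs C xs) (tensor_objs C ys)"
  by (induction xs)
    (simp_all add: tensor_obj_unit_left tensor_objs_Cons tensor_obj_assoc tensor_objs_Obj)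

lemma Id_tensor_objs_append:
  "set xs \<subseteq> Obj C \<Longrightarrow> set ys \<subseteq> Obj C \<Longrightarrow>
   Id C (tensor_objs C (xs @ ys)) = TM C (Id C (tensor_objs C xs)) (Id C (tensor_objs C ys))"
  by (simp add: tensor_objs_append tensor_id tensor_objs_Obj)

lemma whisker_hom:
  "f \<in> Hom C (tensor_objs C a) (tensor_objs C b) \<Longrightarrow> set l \<subseteq> Obj C \<Longrightarrow> set a \<subseteq> Obj C \<Longrightarrow>
   set b \<subseteq> Obj C \<Longrightarrow> set r \<subseteq> Obj C \<Longrightarrow>
   whisker C l f r \<in> Hom C (tensor_objs C (l @ a @ r)) (tensor_objs C (l @ b @ r))"
  unfolding whisker_def
  by (simp add: tensor_objs_append tensor_obj_assoc[symmetric] tensor_objs_Obj tensor_hom id_hom)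

lemma whisker_comp:
  assumes f: "f \<in> Hom C (tensor_objs C a) (tensor_objs C b)"
    and g: "g \<in> Hom C (tensor_objs C b) (tensor_objs C c)"
    and l: "set l \<subseteq> Obj C" and r: "set r \<subseteq> Obj C"
  shows "whisker C l (Cmp C g f) r = Cmp C (whisker C l g r) (whisker C l f r)"
proof -
  have idl: "Id C (tensor_objs C l) \<in> Hom C (tensor_objs C l) (tensor_objs C l)"
    and idr: "Id C (tensor_objs C r) \<in> Hom C (tensor_objs C r) (tensor_objs C r)"
    using l r by (simp_all add: id_hom tensor_objs_Obj)
  show ?thesis
    unfolding whisker_def
    using interchange[OF idl idl f g] interchange[OF tensor_hom[OF idl f] tensor_hom[OF idl g] idr idr]
      comp_id_left[OF idl] comp_id_left[OF idr]
    by simp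
qed

lemma whisker_append_left:
  "set p \<subseteq> Obj C \<Longrightarrow> set q \<subseteq> Obj C \<Longrightarrow> set r \<subseteq> Obj C \<Longrightarrow> is_arr C g \<Longrightarrow>
   whisker C (p @ q) g r = TM C (Id C (tensor_objs C p)) (whisker C q g r)"
  unfolding whisker_def
  by (simp add: Id_tensor_objs_append tensor_assoc is_arr_Id_tensor_objs is_arr_tensor)

end

section \<open>String diagrams\<close>

text \<open>A layer \<open>(l, f, a, b, r)\<close> stands for \<open>id\<^bsub>l\<^esub> \<otimes> f \<otimes> id\<^bsub>r\<^esub>\<close> with \<open>f : a \<rightarrow> b\<close>, each of \<open>l, a, b, r\<close>
  a list of objects; a string diagram is a list of layers, applied from left to right.\<close>

type_synonym ('o,'m) layer = "'o list \<times> 'm \<times> 'o list \<times> 'o list \<times> 'o list"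

fun layer_arr :: "('o,'m) smcat \<Rightarrow> ('o,'m) layer \<Rightarrow> 'm" where
  "layer_arr C (l, f, a, b, r) = whisker C l f r"

fun layer_dom :: "('o,'m) layer \<Rightarrow> 'o list" where
  "layer_dom (l, f, a, b, r) = l @ a @ r"

fun layer_cod :: "('o,'m) layer \<Rightarrow> 'o list" where
  "layer_cod (l, f, a, b, r) = l @ b @ r"

fun layer_ok :: "('o,'m) smcat \<Rightarrow> ('o,'m) layer \<Rightarrow> bool" where
  "layer_ok C (l, f, a, b, r) \<longleftrightarrow>
     f \<in> Hom C (tensor_objs C a) (tensor_objs C b) \<and>
     set l \<subseteq> Obj C \<and> set a \<subseteq> Obj C \<and> set b \<subseteq> Obj C \<and> set r \<subseteq> Obj C"

fun diagram_ok :: "('o,'m) smcat \<Rightarrow> ('o,'m) layer list \<Rightarrow> bool" where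
  "diagram_ok C [] \<longleftrightarrow> False"
| "diagram_ok C [L] \<longleftrightarrow> layer_ok C L"
| "diagram_ok C (L1 # L2 # Ls) \<longleftrightarrow>
     layer_ok C L1 \<and> layer_cod L1 = layer_dom L2 \<and> diagram_ok C (L2 # Ls)"

definition diagram_arr :: "('o,'m) smcat \<Rightarrow> ('o,'m) layer list \<Rightarrow> 'm" where
  "diagram_arr C Ls = foldl (\<lambda>g L. Cmp C (layer_arr C L) g) (layer_arr C (hd Ls)) (tl Ls)"

fun whisker_layer :: "'o list \<Rightarrow> 'o list \<Rightarrow> ('o,'m) layer \<Rightarrow> ('o,'m) layer" where
  "whisker_layer p s (l, f, a, b, r) = (p @ l, f, a, b, r @ s)"

text \<open>Two consecutive layers are apart when their boxes occupy disjoint ranges of wires,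
  so that by interchange they may be applied in the opposite order, as in \<open>swap_layers\<close>.\<close>

fun layers_apart :: "('o,'m) layer \<Rightarrow> ('o,'m) layer \<Rightarrow> bool" where
  "layers_apart (l1, f, a, b, r1) (l2, g, c, d, r2) \<longleftrightarrow>
     length l1 + length b \<le> length l2 \<or> length l2 + length c \<le> length l1"

fun swap_layers :: "('o,'m) layer \<Rightarrow> ('o,'m) layer \<Rightarrow> ('o,'m) layer list" where
  "swap_layers (l1, f, a, b, r1) (l2, g, c, d, r2) =
     (if length l1 + length b \<le> length l2 then
        [(l1 @ a @ drop (length l1 + length b) l2, g, c, d, r2),
         (l1, f, a, b, drop (length l1 + length b) l2 @ d @ r2)]
      else
        [(l2, g, c, d, drop (length l2 + length c) l1 @ a @ r1),
         (l2 @ d @ drop (length l2 + length c) l1, f, a, b, r1)])"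

context strict_monoidal
begin

lemma layer_arr_hom:
  "layer_ok C L \<Longrightarrow> layer_arr C L \<in> Hom C (tensor_objs C (layer_dom L)) (tensor_objs C (layer_cod L))"
  by (cases L) (auto intro: whisker_hom)

lemma diagram_ok_Cons:
  "diagram_ok C (L # Ls) \<longleftrightarrow> layer_ok C L \<and> (Ls \<noteq> [] \<longrightarrow> layer_cod L = layer_dom (hd Ls) \<and> diagram_ok C Ls)"
  by (cases Ls) auto

lemma diagram_ok_append:
  "Ls \<noteq> [] \<Longrightarrow> Ms \<noteq> [] \<Longrightarrow>
   diagram_ok C (Ls @ Ms) \<longleftrightarrow> diagram_ok C Ls \<and> diagram_ok C Ms \<and> layer_cod (last Ls) = layer_dom (hd Ms)"
  by (induction Ls) (auto simp: diagram_ok_Cons)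

lemma diagram_ok_infix: "diagram_ok C (P @ X @ Q) \<Longrightarrow> X \<noteq> [] \<Longrightarrow> diagram_ok C X"
  by (cases "P = []"; cases "Q = []") (auto simp: diagram_ok_append simp del: append_assoc)

lemma diagram_arr_single [simp]: "diagram_arr C [L] = layer_arr C L"
  by (simp add: diagram_arr_def)

lemma diagram_arr_snoc:
  "Ls \<noteq> [] \<Longrightarrow> diagram_arr C (Ls @ [L]) = Cmp C (layer_arr C L) (diagram_arr C Ls)"
  by (cases Ls) (simp_all add: diagram_arr_def)

lemma diagram_arr_hom:
  "diagram_ok C Ls \<Longrightarrow>
   diagram_arr C Ls \<in> Hom C (tensor_objs C (layer_dom (hd Ls))) (tensor_objs C (layer_cod (last Ls)))"
proof (induction Ls rule: rev_induct)
  case (snoc L Ls)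
  show ?case
  proof (cases "Ls = []")
    case False
    then have "diagram_ok C Ls" "layer_ok C L" "layer_cod (last Ls) = layer_dom L"
      using snoc.prems by (auto simp: diagram_ok_append)
    then show ?thesis
      using snoc.IH comp_hom layer_arr_hom False by (fastforce simp: diagram_arr_snoc)
  qed (use snoc in \<open>simp add: layer_arr_hom\<close>)
qed simp

lemma diagram_arr_append:
  "diagram_ok C (Ls @ Ms) \<Longrightarrow> Ls \<noteq> [] \<Longrightarrow> Ms \<noteq> [] \<Longrightarrow>
   diagram_arr C (Ls @ Ms) = Cmp C (diagram_arr C Ms) (diagram_arr C Ls)"
proof (induction Ms rule: rev_induct)
  case (snoc M Ms)
  show ?case
  proof (cases "Ms = []")
    case False
    have ok: "diagram_ok C Ls" "diagram_ok C Ms" "layer_ok C M"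
      "layer_cod (last Ls) = layer_dom (hd Ms)" "layer_cod (last Ms) = layer_dom M"
      using snoc.prems False by (auto simp: diagram_ok_append simp del: append_assoc)
    have "diagram_arr C (Ls @ Ms @ [M]) = Cmp C (layer_arr C M) (Cmp C (diagram_arr C Ms) (diagram_arr C Ls))"
      using snoc.IH snoc.prems(2) False ok diagram_arr_snoc[of "Ls @ Ms" M]
      by (simp add: diagram_ok_append)
    also have "\<dots> = Cmp C (Cmp C (layer_arr C M) (diagram_arr C Ms)) (diagram_arr C Ls)"
      using diagram_arr_hom[OF ok(1)] diagram_arr_hom[OF ok(2)] layer_arr_hom[OF ok(3)] ok(4,5)
      by (metis comp_assoc)
    finally show ?thesis using False by (simp add: diagram_arr_snoc)
  qed (use snoc in \<open>simp add: diagram_arr_snoc\<close>)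
qed simp

lemma diagram_arr_appendI:
  "diagram_ok C (Ls @ Ms) \<Longrightarrow> Ls \<noteq> [] \<Longrightarrow> Ms \<noteq> [] \<Longrightarrow>
   diagram_arr C Ls = f \<Longrightarrow> diagram_arr C Ms = g \<Longrightarrow> diagram_arr C (Ls @ Ms) = Cmp C g f"
  by (simp add: diagram_arr_append)

lemma diagram_arr_replace:
  assumes eq: "diagram_arr C X = diagram_arr C Y"
    and ok: "diagram_ok C (P @ X @ Q)" "diagram_ok C (P @ Y @ Q)" and ne: "X \<noteq> []" "Y \<noteq> []"
  shows "diagram_arr C (P @ X @ Q) = diagram_arr C (P @ Y @ Q)"
proof -
  have "diagram_arr C (X @ Q) = diagram_arr C (Y @ Q)" if "diagram_ok C (X @ Q)" "diagram_ok C (Y @ Q)"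
    using that eq ne by (cases "Q = []") (simp_all add: diagram_arr_append)
  moreover have "diagram_ok C (X @ Q)" "diagram_ok C (Y @ Q)"
    using ok ne by (cases "P = []"; auto simp: diagram_ok_append simp del: append_assoc)+
  ultimately show ?thesis
    using ok ne by (cases "P = []") (simp_all add: diagram_arr_append del: append_assoc)
qed

lemma whisker_tensor_comp:
  assumes f: "f \<in> Hom C a b" and g: "g \<in> Hom C b c" and p: "p \<in> Obj C" and s: "s \<in> Obj C"
  shows "Cmp C (TM C (Id C p) (TM C g (Id C s))) (TM C (Id C p) (TM C f (Id C s)))
       = TM C (Id C p) (TM C (Cmp C g f) (Id C s))"
  using interchange[OF f g id_hom[OF s] id_hom[OF s]]
    interchange[OF id_hom[OF p] id_hom[OF p] tensor_hom[OF f id_hom[OF s]] tensor_hom[OF g id_hom[OF s]]]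
    comp_id_left[OF id_hom[OF p]] comp_id_left[OF id_hom[OF s]]
  by simp

lemma layer_arr_whisker_layer:
  assumes L: "layer_ok C L" and p: "set p \<subseteq> Obj C" and s: "set s \<subseteq> Obj C"
  shows "layer_arr C (whisker_layer p s L)
     = TM C (Id C (tensor_objs C p)) (TM C (layer_arr C L) (Id C (tensor_objs C s)))"
proof (cases L)
  case (fields l f a b r)
  then have "is_arr C f" "set l \<subseteq> Obj C" "set r \<subseteq> Obj C"
    using L by (auto intro: is_arrI)
  then show ?thesis
    using fields p s
    by (simp add: whisker_def Id_tensor_objs_append tensor_assoc is_arr_Id_tensor_objs is_arr_tensor)
qed

lemma diagram_arr_whisker:
  "diagram_ok C X \<Longrightarrow> set p \<subseteq> Obj C \<Longrightarrow> set s \<subseteq> Obj C \<Longrightarrow>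
   diagram_arr C (map (whisker_layer p s) X)
     = TM C (Id C (tensor_objs C p)) (TM C (diagram_arr C X) (Id C (tensor_objs C s)))"
proof (induction X rule: rev_induct)
  case (snoc L X)
  show ?case
  proof (cases "X = []")
    case False
    then have ok: "diagram_ok C X" "layer_ok C L" "layer_cod (last X) = layer_dom L"
      using snoc.prems by (auto simp: diagram_ok_append)
    have "diagram_arr C (map (whisker_layer p s) (X @ [L]))
        = Cmp C (layer_arr C (whisker_layer p s L)) (diagram_arr C (map (whisker_layer p s) X))"
      using diagram_arr_snoc[of "map (whisker_layer p s) X"] False by simp
    also have "\<dots> = TM C (Id C (tensor_objs C p)) (TM C (Cmp C (layer_arr C L) (diagram_arr C X)) (Id C (tensor_objs C s)))"
      using snoc.IH[OF ok(1) snoc.prems(2,3)] layer_arr_whisker_layer[OF ok(2) snoc.prems(2,3)]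
        whisker_tensor_comp[OF diagram_arr_hom[OF ok(1)], of "layer_arr C L"] layer_arr_hom[OF ok(2)] ok(3)
        snoc.prems(2,3)
      by (simp add: tensor_objs_Obj)
    finally show ?thesis using False by (simp add: diagram_arr_snoc)
  qed (use snoc in \<open>simp add: layer_arr_whisker_layer\<close>)
qed simp

lemma diagram_arr_interchange:
  assumes l1: "layer_ok C (l, f, a, b, m @ c @ r)" and l2: "layer_ok C (l @ b @ m, g, c, d, r)"
  shows "diagram_arr C [(l, f, a, b, m @ c @ r), (l @ b @ m, g, c, d, r)]
       = diagram_arr C [(l @ a @ m, g, c, d, r), (l, f, a, b, m @ d @ r)]"
proof -
  have objs: "set l \<subseteq> Obj C" "set a \<subseteq> Obj C" "set b \<subseteq> Obj C" "set m \<subseteq> Obj C" "set c \<subseteq> Obj C"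
     "set d \<subseteq> Obj C" "set r \<subseteq> Obj C"
    and f: "f \<in> Hom C (tensor_objs C a) (tensor_objs C b)"
    and g: "g \<in> Hom C (tensor_objs C c) (tensor_objs C d)"
    using l1 l2 by auto
  define F where "F = TM C (Id C (tensor_objs C l)) f"
  define G where "G = whisker C m g r"
  have F: "F \<in> Hom C (tensor_objs C (l @ a)) (tensor_objs C (l @ b))"
    unfolding F_def using objs f by (simp add: tensor_objs_append tensor_hom id_hom tensor_objs_Obj)
  have G: "G \<in> Hom C (tensor_objs C (m @ c @ r)) (tensor_objs C (m @ d @ r))"
    unfolding G_def using objs g by (simp add: whisker_hom)
  have "whisker C l f (m @ c @ r) = TM C F (Id C (tensor_objs C (m @ c @ r)))"
    and "whisker C l f (m @ d @ r) = TM C F (Id C (tensor_objs C (m @ d @ r)))"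
    unfolding F_def whisker_def by simp_all
  moreover have "whisker C (l @ x @ m) g r = TM C (Id C (tensor_objs C (l @ x))) G"
    if "set x \<subseteq> Obj C" for x
    using whisker_append_left[of "l @ x" m r g] objs that is_arrI[OF g] unfolding G_def by simp
  ultimately show ?thesis
    using objs by (simp add: diagram_arr_def tensor_as_comp_left[OF F G] tensor_as_comp_right[OF F G])
qed

lemma diagram_arr_swap_layers:
  assumes ok: "diagram_ok C [L1, L2]" and apart: "layers_apart L1 L2"
  shows "diagram_arr C [L1, L2] = diagram_arr C (swap_layers L1 L2)"
proof -
  obtain l1 f a b r1 where L1: "L1 = (l1, f, a, b, r1)" by (cases L1)
  obtain l2 g c d r2 where L2: "L2 = (l2, g, c, d, r2)" by (cases L2)
  have ok1: "layer_ok C L1" and ok2: "layer_ok C L2" and eq: "l1 @ b @ r1 = l2 @ c @ r2"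
    using ok L1 L2 by auto
  show ?thesis
  proof (cases "length l1 + length b \<le> length l2")
    case True
    define m where "m = drop (length l1 + length b) l2"
    have "take (length l1 + length b) l2 = l1 @ b" "r1 = m @ c @ r2"
      using True arg_cong[OF eq, of "take (length l1 + length b)"] arg_cong[OF eq, of "drop (length l1 + length b)"]
      unfolding m_def by simp_all
    then have "l2 = l1 @ b @ m" "r1 = m @ c @ r2"
      unfolding m_def by (metis append_assoc append_take_drop_id)+
    then show ?thesis
      using diagram_arr_interchange[of l1 f a b m c r2 g d] ok1 ok2 L1 L2 True m_def by simp
  next
    case False
    with apart L1 L2 have le: "length l2 + length c \<le> length l1" by simp
    define m where "m = drop (length l2 + length c) l1"
    have "take (length l2 + length c) l1 = l2 @ c" "r2 = m @ b @ r1"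
      using le arg_cong[OF eq, of "take (length l2 + length c)"] arg_cong[OF eq, of "drop (length l2 + length c)"]
      unfolding m_def by simp_all
    then have "l1 = l2 @ c @ m" "r2 = m @ b @ r1"
      unfolding m_def by (metis append_assoc append_take_drop_id)+
    then show ?thesis
      using diagram_arr_interchange[of l2 g c d m a r1 f b] ok1 ok2 L1 L2 False le m_def by simp
  qed
qed

lemma diagram_swap:
  assumes ok: "diagram_ok C Ls" and i: "Suc i < length Ls"
    and apart: "layers_apart (Ls ! i) (Ls ! Suc i)"
    and Ms: "Ms = take i Ls @ swap_layers (Ls ! i) (Ls ! Suc i) @ drop (Suc (Suc i)) Ls"
    and ok': "diagram_ok C Ms"
  shows "diagram_arr C Ls = diagram_arr C Ms"
proof -
  have Ls: "Ls = take i Ls @ [Ls ! i, Ls ! Suc i] @ drop (Suc (Suc i)) Ls"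
    using i by (metis Cons_nth_drop_Suc Suc_lessD append_Cons append_Nil append_take_drop_id)
  have "diagram_ok C [Ls ! i, Ls ! Suc i]"
    using diagram_ok_infix ok Ls by (metis list.distinct(1))
  moreover have "swap_layers (Ls ! i) (Ls ! Suc i) \<noteq> []"
    by (cases "Ls ! i"; cases "Ls ! Suc i") auto
  ultimately show ?thesis
    using diagram_arr_replace[OF diagram_arr_swap_layers[OF _ apart]] ok ok' Ls Ms by (metis list.distinct(1))
qed

lemma diagram_rewrite:
  assumes eq: "diagram_arr C X = diagram_arr C Y" and okX: "diagram_ok C X" and okY: "diagram_ok C Y"
    and ne: "X \<noteq> []" "Y \<noteq> []" and ps: "set p \<subseteq> Obj C" "set s \<subseteq> Obj C"
    and at: "take (length X) (drop i Ls) = map (whisker_layer p s) X"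
    and Ms: "Ms = take i Ls @ map (whisker_layer p s) Y @ drop (i + length X) Ls"
    and ok: "diagram_ok C Ls" and ok': "diagram_ok C Ms"
  shows "diagram_arr C Ls = diagram_arr C Ms"
proof -
  have Ls: "Ls = take i Ls @ map (whisker_layer p s) X @ drop (i + length X) Ls"
    using at by (metis append_take_drop_id drop_drop add.commute)
  show ?thesis
    using diagram_arr_replace[of "map (whisker_layer p s) X" "map (whisker_layer p s) Y"]
      diagram_arr_whisker[OF okX ps] diagram_arr_whisker[OF okY ps] eq ok ok' ne Ls Ms
    by (metis Nil_is_map_conv)
qed

lemma diagram_arr_Cons_id:
  assumes ok: "diagram_ok C (Z # Q)" and Q: "Q \<noteq> []"
    and Z: "layer_arr C Z = Id C (tensor_objs C (layer_cod Z))"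
  shows "diagram_arr C (Z # Q) = diagram_arr C Q"
proof -
  have okQ: "diagram_ok C Q" and dom: "layer_cod Z = layer_dom (hd Q)"
    using ok Q by (simp_all add: diagram_ok_Cons)
  show ?thesis
    using diagram_arr_append[of "[Z]" Q] ok Q Z comp_id_right[OF diagram_arr_hom[OF okQ]] dom by simp
qed

lemma diagram_arr_snoc_id:
  assumes ok: "diagram_ok C (P @ [Z])" and P: "P \<noteq> []"
    and Z: "layer_arr C Z = Id C (tensor_objs C (layer_dom Z))"
  shows "diagram_arr C (P @ [Z]) = diagram_arr C P"
proof -
  have okP: "diagram_ok C P" and cod: "layer_cod (last P) = layer_dom Z"
    using ok P by (simp_all add: diagram_ok_append)
  show ?thesis
    using diagram_arr_snoc[OF P] Z comp_id_left[OF diagram_arr_hom[OF okP]] cod by simp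
qed

lemma diagram_remove_id:
  assumes ok: "diagram_ok C Ls" and i: "i < length Ls"
    and id: "Ls ! i = (l, Id C (Unit C), [], [], r)"
    and Ms: "Ms = take i Ls @ drop (Suc i) Ls" and ne: "Ms \<noteq> []"
  shows "diagram_arr C Ls = diagram_arr C Ms"
proof -
  define P Q Z where "P = take i Ls" and "Q = drop (Suc i) Ls" and "Z = Ls ! i"
  have Ls: "Ls = P @ [Z] @ Q"
    unfolding P_def Q_def Z_def using i by (metis Cons_nth_drop_Suc append_Cons append_Nil append_take_drop_id)
  have "layer_ok C Z"
    using diagram_ok_infix[of P "[Z]" Q] ok Ls by simp
  then have "set l \<subseteq> Obj C" "set r \<subseteq> Obj C" using id Z_def by auto
  then have Z: "layer_arr C Z = Id C (tensor_objs C (l @ r))"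
    using id Z_def by (simp add: whisker_def tensor_unit_right is_arr_Id_tensor_objs Id_tensor_objs_append)
  show ?thesis
  proof (cases "Q = []")
    case True
    then have "P \<noteq> []" "Ms = P" "Ls = P @ [Z]"
      using ne Ms Ls unfolding P_def Q_def by simp_all
    then show ?thesis
      using diagram_arr_snoc_id[of P Z] ok Z id Z_def by simp
  next
    case False
    have okZQ: "diagram_ok C (Z # Q)"
      using diagram_ok_infix[of P "Z # Q" "[]"] ok Ls by simp
    have "diagram_ok C (P @ Q)"
    proof (cases "P = []")
      case nonempty: False
      have "diagram_ok C P" "layer_cod (last P) = layer_dom Z" "layer_cod Z = layer_dom (hd Q)"
        using ok Ls nonempty okZQ False by (simp_all add: diagram_ok_append diagram_ok_Cons)
      moreover have "layer_dom Z = layer_cod Z" using id Z_def by simp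
      ultimately show ?thesis
        using okZQ nonempty False by (simp add: diagram_ok_append diagram_ok_Cons)
    qed (use okZQ False in \<open>simp add: diagram_ok_Cons\<close>)
    moreover have "diagram_arr C (Z # Q) = diagram_arr C Q"
      using diagram_arr_Cons_id[OF okZQ False] Z id Z_def by simp
    ultimately have "diagram_arr C (P @ (Z # Q) @ []) = diagram_arr C (P @ Q @ [])"
      using diagram_arr_replace[of "Z # Q" Q P "[]"] ok Ls False by simp
    then show ?thesis
      using Ls Ms unfolding P_def Q_def by simp
  qed
qed

end

section \<open>Transposing a weak crossed product\<close>

locale wcp_transposition = strict_monoidal C for C :: "('o,'m) smcat" +
  fixes A V :: 'o and eta mu psi phi sigma :: 'm
  assumes A_obj: "A \<in> Obj C" and V_obj: "V \<in> Obj C"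
    and eta_hom: "eta \<in> Hom C (Unit C) A" and mu_hom: "mu \<in> Hom C (TO C A A) A"
    and psi_hom: "psi \<in> Hom C (TO C V A) (TO C A V)"
    and phi_hom: "phi \<in> Hom C (TO C A V) (TO C V A)"
    and sigma_hom: "sigma \<in> Hom C (TO C V V) (TO C A V)"
    and mu_assoc: "Cmp C mu (TM C mu (Id C A)) = Cmp C mu (TM C (Id C A) mu)"
    and mu_unit_left: "Cmp C mu (TM C eta (Id C A)) = Id C A"
    and mu_unit_right: "Cmp C mu (TM C (Id C A) eta) = Id C A"
    and psi_compat: "psi_compat C A V mu psi"
    and phi_compat: "Cmp C (TM C (Id C V) mu) (Cmp C (TM C phi (Id C A)) (TM C (Id C A) phi))
                     = Cmp C phi (TM C mu (Id C V))"
    and psi_phi: "Cmp C psi phi = nablaAV C A V eta mu psi"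
    and phi_psi: "Cmp C phi psi = nablaVA C A V eta mu phi"
    and nabla_sigma: "Cmp C (nablaAV C A V eta mu psi) sigma = sigma"
    and twisted: "twistedAV C A V mu psi sigma"
    and cocycle: "cocycleAV C A V mu psi sigma"
begin

text \<open>Here \<open>psi\<close> is \<open>\<psi>\<^sub>V\<^sup>A\<close>, \<open>phi\<close> is \<open>\<psi>\<^sub>A\<^sup>V\<close> and \<open>Cmp C phi sigma\<close> is \<open>\<sigma>\<^sub>A\<^sup>V\<close>; the generator
  layer \<open>Ps l r\<close> is \<open>l \<otimes> \<psi>\<^sub>V\<^sup>A \<otimes> r\<close>, and similarly for the others.\<close>

abbreviation "Mu l r \<equiv> (l, mu, [A, A], [A], r)"
abbreviation "Et l r \<equiv> (l, eta, [], [A], r)"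
abbreviation "Ps l r \<equiv> (l, psi, [V, A], [A, V], r)"
abbreviation "Ph l r \<equiv> (l, phi, [A, V], [V, A], r)"
abbreviation "Sg l r \<equiv> (l, sigma, [V, V], [A, V], r)"
abbreviation "Sp l r \<equiv> (l, Cmp C phi sigma, [V, V], [V, A], r)"
abbreviation "Iv l r \<equiv> (l, Id C (Unit C), [], [], r)"

lemma sigmaVA_hom: "Cmp C phi sigma \<in> Hom C (TO C V V) (TO C V A)"
  using comp_hom[OF sigma_hom phi_hom] .

lemma is_arr_generators:
  "is_arr C eta" "is_arr C mu" "is_arr C psi" "is_arr C phi" "is_arr C sigma" "is_arr C (Cmp C phi sigma)"
  using eta_hom mu_hom psi_hom phi_hom sigma_hom sigmaVA_hom by (auto intro: is_arrI)

lemmas layer_homs = eta_hom mu_hom psi_hom phi_hom sigma_hom sigmaVA_hom A_obj V_obj unit_obj id_hom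

lemmas layer_eval = diagram_arr_def whisker_def tensor_unit_left tensor_unit_right is_arr_tensor
  is_arr_Id is_arr_generators A_obj V_obj unit_obj tensor_obj tensor_assoc

lemma mu_assoc_diagram: "diagram_arr C [Mu [] [A], Mu [] []] = diagram_arr C [Mu [A] [], Mu [] []]"
  using mu_assoc by (simp add: layer_eval)

lemma mu_unit_left_diagram: "diagram_arr C [Et [] [A], Mu [] []] = diagram_arr C [Iv [A] []]"
  using mu_unit_left by (simp add: layer_eval)

lemma mu_unit_right_diagram: "diagram_arr C [Et [A] [], Mu [] []] = diagram_arr C [Iv [A] []]"
  using mu_unit_right by (simp add: layer_eval)

lemma psi_compat_diagram:
  "diagram_arr C [Ps [] [A], Ps [A] [], Mu [] [V]] = diagram_arr C [Mu [V] [], Ps [] []]"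
  using psi_compat by (simp add: layer_eval psi_compat_def)

lemma phi_compat_diagram:
  "diagram_arr C [Ph [A] [], Ph [] [A], Mu [V] []] = diagram_arr C [Mu [] [V], Ph [] []]"
  using phi_compat by (simp add: layer_eval)

lemma nablaAV_diagram: "nablaAV C A V eta mu psi = diagram_arr C [Et [A, V] [], Ps [A] [], Mu [] [V]]"
  by (simp add: layer_eval nablaAV_def)

lemma nablaVA_diagram: "nablaVA C A V eta mu phi = diagram_arr C [Et [] [V, A], Ph [] [A], Mu [V] []]"
proof -
  have eta_V: "TM C eta (Id C V) \<in> Hom C (tensor_objs C [V]) (tensor_objs C [A, V])"
    using tensor_hom[OF eta_hom id_hom[OF V_obj]] by (simp add: tensor_obj_unit_left V_obj)
  have "is_arr C (Cmp C phi (TM C eta (Id C V)))"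
    using comp_hom[OF eta_V[simplified] phi_hom] is_arrI by blast
  then have "TM C (Cmp C phi (TM C eta (Id C V))) (Id C A)
      = whisker C [] (Cmp C phi (TM C eta (Id C V))) [A]"
    by (simp add: layer_eval)
  also have "\<dots> = Cmp C (whisker C [] phi [A]) (whisker C [] (TM C eta (Id C V)) [A])"
    by (rule whisker_comp[OF eta_V, where c = "[V, A]"]) (simp_all add: phi_hom A_obj V_obj)
  finally show ?thesis
    by (simp add: layer_eval nablaVA_def tensor_id)
qed

lemma psi_phi_diagram:
  "diagram_arr C [Ph [] [], Ps [] []] = diagram_arr C [Et [A, V] [], Ps [A] [], Mu [] [V]]"
  using psi_phi by (simp add: layer_eval nablaAV_def)

lemma phi_psi_diagram:
  "diagram_arr C [Ps [] [], Ph [] []] = diagram_arr C [Et [] [V, A], Ph [] [A], Mu [V] []]"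
  using phi_psi by (simp add: layer_eval nablaVA_diagram)

lemma twisted_diagram:
  "diagram_arr C [Sg [] [A], Ps [A] [], Mu [] [V]]
   = diagram_arr C [Ps [V] [], Ps [] [V], Sg [A] [], Mu [] [V]]"
  using twisted by (simp add: layer_eval twistedAV_def)

lemma cocycle_diagram:
  "diagram_arr C [Sg [] [V], Sg [A] [], Mu [] [V]]
   = diagram_arr C [Sg [V] [], Ps [] [V], Sg [A] [], Mu [] [V]]"
  using cocycle by (simp add: layer_eval cocycleAV_def)

lemma nabla_sigma_diagram:
  "diagram_arr C [Sg [] [], Et [A, V] [], Ps [A] [], Mu [] [V]] = diagram_arr C [Sg [] []]"
proof -
  have "diagram_arr C ([Sg [] []] @ [Et [A, V] [], Ps [A] [], Mu [] [V]])
      = Cmp C (nablaAV C A V eta mu psi) sigma"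
    by (subst diagram_arr_append) (simp_all add: layer_homs nablaAV_diagram layer_eval)
  then show ?thesis using nabla_sigma by (simp add: layer_eval)
qed

lemma sigmaVA_split: "diagram_arr C [Sp [] []] = diagram_arr C [Sg [] [], Ph [] []]"
  by (simp add: layer_eval)

lemma nablaVA_after_phi:
  "diagram_arr C [Ph [] [], Et [] [V, A], Ph [] [A], Mu [V] []] = diagram_arr C [Ph [] []]"
proof -
  have "diagram_arr C [Ph [] [], Et [] [V, A], Ph [] [A], Mu [V] []]
      = diagram_arr C [Et [] [A, V], Ph [A] [], Ph [] [A], Mu [V] []]"
    by (rule diagram_swap[where i = 0]) (simp_all add: layer_homs)
  also have "\<dots> = diagram_arr C [Et [] [A, V], Mu [] [V], Ph [] []]"
    by (rule diagram_rewrite[where i = 1 and p = "[]" and s = "[]", OF phi_compat_diagram])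
      (simp_all add: layer_homs)
  also have "\<dots> = diagram_arr C [Iv [A] [V], Ph [] []]"
    by (rule diagram_rewrite[where i = 0 and p = "[]" and s = "[V]", OF mu_unit_left_diagram])
      (simp_all add: layer_homs)
  also have "\<dots> = diagram_arr C [Ph [] []]"
    by (rule diagram_remove_id[where i = 0]) (simp_all add: layer_homs)
  finally show ?thesis .
qed

lemma phi_mu_absorbs_nablaVA:
  "diagram_arr C [Et [A] [V, A], Ph [A] [A], Mu [A, V] [], Ph [] [A], Mu [V] []]
   = diagram_arr C [Ph [] [A], Mu [V] []]"
proof -
  have "diagram_arr C [Et [A] [V, A], Ph [A] [A], Mu [A, V] [], Ph [] [A], Mu [V] []]
      = diagram_arr C [Et [A] [V, A], Ph [A] [A], Ph [] [A, A], Mu [V, A] [], Mu [V] []]"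
    by (rule diagram_swap[where i = 2]) (simp_all add: layer_homs)
  also have "\<dots> = diagram_arr C [Et [A] [V, A], Ph [A] [A], Ph [] [A, A], Mu [V] [A], Mu [V] []]"
    by (rule diagram_rewrite[where i = 3 and p = "[V]" and s = "[]", OF mu_assoc_diagram[symmetric]])
      (simp_all add: layer_homs)
  also have "\<dots> = diagram_arr C [Et [A] [V, A], Mu [] [V, A], Ph [] [A], Mu [V] []]"
    by (rule diagram_rewrite[where i = 1 and p = "[]" and s = "[A]", OF phi_compat_diagram])
      (simp_all add: layer_homs)
  also have "\<dots> = diagram_arr C [Iv [A] [V, A], Ph [] [A], Mu [V] []]"
    by (rule diagram_rewrite[where i = 0 and p = "[]" and s = "[V, A]", OF mu_unit_right_diagram])
      (simp_all add: layer_homs)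
  also have "\<dots> = diagram_arr C [Ph [] [A], Mu [V] []]"
    by (rule diagram_remove_id[where i = 0]) (simp_all add: layer_homs)
  finally show ?thesis .
qed

lemma phi_mu_via_psi:
  "diagram_arr C [Ph [] [A], Mu [V] []] = diagram_arr C [Ps [A] [], Mu [] [V], Ph [] []]"
proof -
  have "diagram_arr C [Ph [] [A], Mu [V] []]
      = diagram_arr C [Et [A] [V, A], Ph [A] [A], Mu [A, V] [], Ph [] [A], Mu [V] []]"
    by (rule diagram_rewrite[where i = 0 and p = "[]" and s = "[]", OF phi_mu_absorbs_nablaVA[symmetric]])
      (simp_all add: layer_homs)
  also have "\<dots> = diagram_arr C [Ps [A] [], Ph [A] [], Ph [] [A], Mu [V] []]"
    by (rule diagram_rewrite[where i = 0 and p = "[A]" and s = "[]", OF phi_psi_diagram[symmetric]])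
      (simp_all add: layer_homs)
  also have "\<dots> = diagram_arr C [Ps [A] [], Mu [] [V], Ph [] []]"
    by (rule diagram_rewrite[where i = 1 and p = "[]" and s = "[]", OF phi_compat_diagram])
      (simp_all add: layer_homs)
  finally show ?thesis .
qed

lemma nablaAV_after_eta:
  "diagram_arr C [Et [] [V], Et [A, V] [], Ps [A] [], Mu [] [V]] = diagram_arr C [Et [V] [], Ps [] []]"
proof -
  have "diagram_arr C [Et [] [V], Et [A, V] [], Ps [A] [], Mu [] [V]]
      = diagram_arr C [Et [V] [], Et [] [V, A], Ps [A] [], Mu [] [V]]"
    by (rule diagram_swap[where i = 0]) (simp_all add: layer_homs)
  also have "\<dots> = diagram_arr C [Et [V] [], Ps [] [], Et [] [A, V], Mu [] [V]]"
    by (rule diagram_swap[where i = 1]) (simp_all add: layer_homs)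
  also have "\<dots> = diagram_arr C [Et [V] [], Ps [] [], Iv [A] [V]]"
    by (rule diagram_rewrite[where i = 2 and p = "[]" and s = "[V]", OF mu_unit_left_diagram])
      (simp_all add: layer_homs)
  also have "\<dots> = diagram_arr C [Et [V] [], Ps [] []]"
    by (rule diagram_remove_id[where i = 2]) (simp_all add: layer_homs)
  finally show ?thesis .
qed

lemma sigma_product_absorbs_nablaAV:
  "diagram_arr C [Et [V, A, V] [], Ps [V, A] [], Mu [V] [V], Ps [] [V], Sg [A] [], Mu [] [V]]
   = diagram_arr C [Ps [] [V], Sg [A] [], Mu [] [V]]"
proof -
  have "diagram_arr C [Et [V, A, V] [], Ps [V, A] [], Mu [V] [V], Ps [] [V], Sg [A] [], Mu [] [V]]
      = diagram_arr C [Et [V, A, V] [], Ps [V, A] [], Ps [] [A, V], Ps [A] [V], Mu [] [V, V], Sg [A] [], Mu [] [V]]"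
    by (rule diagram_rewrite[where i = 2 and p = "[]" and s = "[V]", OF psi_compat_diagram[symmetric]])
      (simp_all add: layer_homs)
  also have "\<dots> = diagram_arr C [Et [V, A, V] [], Ps [V, A] [], Ps [] [A, V], Ps [A] [V], Sg [A, A] [], Mu [] [A, V], Mu [] [V]]"
    by (rule diagram_swap[where i = 4]) (simp_all add: layer_homs)
  also have "\<dots> = diagram_arr C [Et [V, A, V] [], Ps [V, A] [], Ps [] [A, V], Ps [A] [V], Sg [A, A] [], Mu [A] [V], Mu [] [V]]"
    by (rule diagram_rewrite[where i = 5 and p = "[]" and s = "[V]", OF mu_assoc_diagram])
      (simp_all add: layer_homs)
  also have "\<dots> = diagram_arr C [Et [V, A, V] [], Ps [] [V, A], Ps [A, V] [], Ps [A] [V], Sg [A, A] [], Mu [A] [V], Mu [] [V]]"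
    by (rule diagram_swap[where i = 1]) (simp_all add: layer_homs)
  also have "\<dots> = diagram_arr C [Et [V, A, V] [], Ps [] [V, A], Sg [A] [A], Ps [A, A] [], Mu [A] [V], Mu [] [V]]"
    by (rule diagram_rewrite[where i = 2 and p = "[A]" and s = "[]", OF twisted_diagram[symmetric]])
      (simp_all add: layer_homs)
  also have "\<dots> = diagram_arr C [Ps [] [V], Et [A, V, V] [], Sg [A] [A], Ps [A, A] [], Mu [A] [V], Mu [] [V]]"
    by (rule diagram_swap[where i = 0]) (simp_all add: layer_homs)
  also have "\<dots> = diagram_arr C [Ps [] [V], Sg [A] [], Et [A, A, V] [], Ps [A, A] [], Mu [A] [V], Mu [] [V]]"
    by (rule diagram_swap[where i = 1]) (simp_all add: layer_homs)
  also have "\<dots> = diagram_arr C [Ps [] [V], Sg [A] [], Mu [] [V]]"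
    by (rule diagram_rewrite[where i = 1 and p = "[A]" and s = "[]", OF nabla_sigma_diagram])
      (simp_all add: layer_homs)
  finally show ?thesis .
qed

lemma sigma_unit_expansion:
  "diagram_arr C [Sg [] []] = diagram_arr C [Et [V] [V], Ps [] [V], Sg [A] [], Mu [] [V]]"
proof -
  have "diagram_arr C [Sg [] []] = diagram_arr C [Sg [] [], Et [A, V] [], Ps [A] [], Mu [] [V]]"
    by (rule diagram_rewrite[where i = 0 and p = "[]" and s = "[]", OF nabla_sigma_diagram[symmetric]])
      (simp_all add: layer_homs)
  also have "\<dots> = diagram_arr C [Et [V, V] [], Sg [] [A], Ps [A] [], Mu [] [V]]"
    by (rule diagram_swap[where i = 0]) (simp_all add: layer_homs)
  also have "\<dots> = diagram_arr C [Et [V, V] [], Ps [V] [], Ps [] [V], Sg [A] [], Mu [] [V]]"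
    by (rule diagram_rewrite[where i = 1 and p = "[]" and s = "[]", OF twisted_diagram])
      (simp_all add: layer_homs)
  also have "\<dots> = diagram_arr C [Et [V] [V], Et [V, A, V] [], Ps [V, A] [], Mu [V] [V], Ps [] [V], Sg [A] [], Mu [] [V]]"
    by (rule diagram_rewrite[where i = 0 and p = "[V]" and s = "[]", OF nablaAV_after_eta[symmetric]])
      (simp_all add: layer_homs)
  also have "\<dots> = diagram_arr C [Et [V] [V], Ps [] [V], Sg [A] [], Mu [] [V]]"
    by (rule diagram_rewrite[where i = 1 and p = "[]" and s = "[]", OF sigma_product_absorbs_nablaAV])
      (simp_all add: layer_homs)
  finally show ?thesis .
qed

lemma sigma_product_absorbs_eta:
  "diagram_arr C [Et [A, V] [V], Ps [A] [V], Mu [] [V, V], Sg [A] [], Mu [] [V]]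
   = diagram_arr C [Sg [A] [], Mu [] [V]]"
proof -
  have "diagram_arr C [Et [A, V] [V], Ps [A] [V], Mu [] [V, V], Sg [A] [], Mu [] [V]]
      = diagram_arr C [Et [A, V] [V], Ps [A] [V], Sg [A, A] [], Mu [] [A, V], Mu [] [V]]"
    by (rule diagram_swap[where i = 2]) (simp_all add: layer_homs)
  also have "\<dots> = diagram_arr C [Et [A, V] [V], Ps [A] [V], Sg [A, A] [], Mu [A] [V], Mu [] [V]]"
    by (rule diagram_rewrite[where i = 3 and p = "[]" and s = "[V]", OF mu_assoc_diagram])
      (simp_all add: layer_homs)
  also have "\<dots> = diagram_arr C [Sg [A] [], Mu [] [V]]"
    by (rule diagram_rewrite[where i = 0 and p = "[A]" and s = "[]", OF sigma_unit_expansion[symmetric]])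
      (simp_all add: layer_homs)
  finally show ?thesis .
qed

lemma twisted_via_phi:
  "diagram_arr C [Ph [V] [], Sg [] [A], Ps [A] [], Mu [] [V]] = diagram_arr C [Ps [] [V], Sg [A] [], Mu [] [V]]"
proof -
  have "diagram_arr C [Ph [V] [], Sg [] [A], Ps [A] [], Mu [] [V]]
      = diagram_arr C [Ph [V] [], Ps [V] [], Ps [] [V], Sg [A] [], Mu [] [V]]"
    by (rule diagram_rewrite[where i = 1 and p = "[]" and s = "[]", OF twisted_diagram])
      (simp_all add: layer_homs)
  also have "\<dots> = diagram_arr C [Et [V, A, V] [], Ps [V, A] [], Mu [V] [V], Ps [] [V], Sg [A] [], Mu [] [V]]"
    by (rule diagram_rewrite[where i = 0 and p = "[V]" and s = "[]", OF psi_phi_diagram])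
      (simp_all add: layer_homs)
  also have "\<dots> = diagram_arr C [Ps [] [V], Sg [A] [], Mu [] [V]]"
    by (rule diagram_rewrite[where i = 0 and p = "[]" and s = "[]", OF sigma_product_absorbs_nablaAV])
      (simp_all add: layer_homs)
  finally show ?thesis .
qed

lemma twisted_via_phi_phi:
  "diagram_arr C [Ph [] [V], Ph [V] [], Sg [] [A], Ps [A] [], Mu [] [V]] = diagram_arr C [Sg [A] [], Mu [] [V]]"
proof -
  have "diagram_arr C [Ph [] [V], Ph [V] [], Sg [] [A], Ps [A] [], Mu [] [V]]
      = diagram_arr C [Ph [] [V], Ps [] [V], Sg [A] [], Mu [] [V]]"
    by (rule diagram_rewrite[where i = 1 and p = "[]" and s = "[]", OF twisted_via_phi])
      (simp_all add: layer_homs)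
  also have "\<dots> = diagram_arr C [Et [A, V] [V], Ps [A] [V], Mu [] [V, V], Sg [A] [], Mu [] [V]]"
    by (rule diagram_rewrite[where i = 0 and p = "[]" and s = "[V]", OF psi_phi_diagram])
      (simp_all add: layer_homs)
  also have "\<dots> = diagram_arr C [Sg [A] [], Mu [] [V]]"
    by (rule diagram_rewrite[where i = 0 and p = "[]" and s = "[]", OF sigma_product_absorbs_eta])
      (simp_all add: layer_homs)
  finally show ?thesis .
qed

lemma phi_after_nablaAV:
  "diagram_arr C [Et [A, V] [], Ps [A] [], Mu [] [V], Ph [] []] = diagram_arr C [Ph [] []]"
proof -
  have "diagram_arr C [Et [A, V] [], Ps [A] [], Mu [] [V], Ph [] []]
      = diagram_arr C [Ph [] [], Ps [] [], Ph [] []]"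
    by (rule diagram_rewrite[where i = 0 and p = "[]" and s = "[]", OF psi_phi_diagram[symmetric]])
      (simp_all add: layer_homs)
  also have "\<dots> = diagram_arr C [Ph [] [], Et [] [V, A], Ph [] [A], Mu [V] []]"
    by (rule diagram_rewrite[where i = 1 and p = "[]" and s = "[]", OF phi_psi_diagram])
      (simp_all add: layer_homs)
  also have "\<dots> = diagram_arr C [Ph [] []]"
    by (rule diagram_rewrite[where i = 0 and p = "[]" and s = "[]", OF nablaVA_after_phi])
      (simp_all add: layer_homs)
  finally show ?thesis .
qed

lemma nablaVA_after_eta:
  "diagram_arr C [Et [V] [], Et [] [V, A], Ph [] [A], Mu [V] []] = diagram_arr C [Et [] [V], Ph [] []]"
proof -
  have "diagram_arr C [Et [V] [], Et [] [V, A], Ph [] [A], Mu [V] []]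
      = diagram_arr C [Et [] [V], Et [A, V] [], Ph [] [A], Mu [V] []]"
    by (rule diagram_swap[where i = 0]) (simp_all add: layer_homs)
  also have "\<dots> = diagram_arr C [Et [] [V], Ph [] [], Et [V, A] [], Mu [V] []]"
    by (rule diagram_swap[where i = 1]) (simp_all add: layer_homs)
  also have "\<dots> = diagram_arr C [Et [] [V], Ph [] [], Iv [V, A] []]"
    by (rule diagram_rewrite[where i = 2 and p = "[V]" and s = "[]", OF mu_unit_right_diagram])
      (simp_all add: layer_homs)
  also have "\<dots> = diagram_arr C [Et [] [V], Ph [] []]"
    by (rule diagram_remove_id[where i = 2]) (simp_all add: layer_homs)
  finally show ?thesis .
qed

lemma tensor_sigmaVA_mu:
  "TM C (Cmp C phi sigma) mu = Cmp C (TM C (Id C (TO C V A)) mu) (TM C (Cmp C phi sigma) (Id C (TO C A A)))"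
  using tensor_as_comp_left[OF sigmaVA_hom mu_hom] by simp

lemma tensor_psi_psi:
  "TM C psi psi = Cmp C (TM C (Id C (TO C A V)) psi) (TM C psi (Id C (TO C V A)))"
  using tensor_as_comp_left[OF psi_hom psi_hom] by simp

lemma tensor_mu_sigma:
  "TM C mu sigma = Cmp C (TM C mu (Id C (TO C A V))) (TM C (Id C (TO C A A)) sigma)"
  using tensor_as_comp_right[OF mu_hom sigma_hom] by simp

lemma nablaVA_sigmaVA: "Cmp C (nablaVA C A V eta mu phi) (Cmp C phi sigma) = Cmp C phi sigma"
proof -
  have "Cmp C (nablaVA C A V eta mu phi) (Cmp C phi sigma)
      = diagram_arr C ([Sg [] [], Ph [] []] @ [Et [] [V, A], Ph [] [A], Mu [V] []])"
    by (subst diagram_arr_append) (simp_all add: layer_homs layer_eval nablaVA_diagram)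
  also have "\<dots> = diagram_arr C [Sg [] [], Ph [] []]"
    by (rule diagram_rewrite[where i = 1 and p = "[]" and s = "[]", OF nablaVA_after_phi])
      (simp_all add: layer_homs)
  also have "\<dots> = Cmp C phi sigma"
    by (simp add: layer_eval)
  finally show ?thesis .
qed

lemma twisted_VA:
  "Cmp C (TM C (Id C V) mu) (Cmp C (TM C (Cmp C phi sigma) (Id C A))
     (Cmp C (TM C (Id C V) phi) (TM C phi (Id C V))))
   = Cmp C (TM C (Id C V) mu) (Cmp C (TM C phi (Id C A)) (TM C (Id C A) (Cmp C phi sigma)))"
proof -
  have "Cmp C (TM C (Id C V) mu) (Cmp C (TM C (Cmp C phi sigma) (Id C A))
          (Cmp C (TM C (Id C V) phi) (TM C phi (Id C V))))
      = diagram_arr C [Ph [] [V], Ph [V] [], Sp [] [A], Mu [V] []]"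
    by (simp add: layer_eval)
  also have "\<dots> = diagram_arr C [Ph [] [V], Ph [V] [], Sg [] [A], Ph [] [A], Mu [V] []]"
    by (rule diagram_rewrite[where i = 2 and p = "[]" and s = "[A]", OF sigmaVA_split])
      (simp_all add: layer_homs)
  also have "\<dots> = diagram_arr C [Ph [] [V], Ph [V] [], Sg [] [A], Ps [A] [], Mu [] [V], Ph [] []]"
    by (rule diagram_rewrite[where i = 3 and p = "[]" and s = "[]", OF phi_mu_via_psi])
      (simp_all add: layer_homs)
  also have "\<dots> = diagram_arr C [Sg [A] [], Mu [] [V], Ph [] []]"
    by (rule diagram_rewrite[where i = 0 and p = "[]" and s = "[]", OF twisted_via_phi_phi])
      (simp_all add: layer_homs)
  also have "\<dots> = diagram_arr C [Sg [A] [], Ph [A] [], Ph [] [A], Mu [V] []]"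
    by (rule diagram_rewrite[where i = 1 and p = "[]" and s = "[]", OF phi_compat_diagram[symmetric]])
      (simp_all add: layer_homs)
  also have "\<dots> = diagram_arr C [Sp [A] [], Ph [] [A], Mu [V] []]"
    by (rule diagram_rewrite[where i = 0 and p = "[A]" and s = "[]", OF sigmaVA_split[symmetric]])
      (simp_all add: layer_homs)
  also have "\<dots> = Cmp C (TM C (Id C V) mu) (Cmp C (TM C phi (Id C A)) (TM C (Id C A) (Cmp C phi sigma)))"
    by (simp add: layer_eval)
  finally show ?thesis .
qed

lemma cocycle_VA:
  "Cmp C (TM C (Id C V) mu) (Cmp C (TM C (Cmp C phi sigma) (Id C A)) (TM C (Id C V) (Cmp C phi sigma)))
   = Cmp C (TM C (Id C V) mu) (Cmp C (TM C (Cmp C phi sigma) (Id C A))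
       (Cmp C (TM C (Id C V) phi) (TM C (Cmp C phi sigma) (Id C V))))"
proof -
  have "Cmp C (TM C (Id C V) mu) (Cmp C (TM C (Cmp C phi sigma) (Id C A)) (TM C (Id C V) (Cmp C phi sigma)))
      = diagram_arr C [Sp [V] [], Sp [] [A], Mu [V] []]"
    by (simp add: layer_eval)
  also have "\<dots> = diagram_arr C [Sp [V] [], Sg [] [A], Ph [] [A], Mu [V] []]"
    by (rule diagram_rewrite[where i = 1 and p = "[]" and s = "[A]", OF sigmaVA_split])
      (simp_all add: layer_homs)
  also have "\<dots> = diagram_arr C [Sg [V] [], Ph [V] [], Sg [] [A], Ph [] [A], Mu [V] []]"
    by (rule diagram_rewrite[where i = 0 and p = "[V]" and s = "[]", OF sigmaVA_split])
      (simp_all add: layer_homs)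
  also have "\<dots> = diagram_arr C [Sg [V] [], Ph [V] [], Sg [] [A], Ps [A] [], Mu [] [V], Ph [] []]"
    by (rule diagram_rewrite[where i = 3 and p = "[]" and s = "[]", OF phi_mu_via_psi])
      (simp_all add: layer_homs)
  also have "\<dots> = diagram_arr C [Sg [V] [], Ps [] [V], Sg [A] [], Mu [] [V], Ph [] []]"
    by (rule diagram_rewrite[where i = 1 and p = "[]" and s = "[]", OF twisted_via_phi])
      (simp_all add: layer_homs)
  also have "\<dots> = diagram_arr C [Sg [] [V], Sg [A] [], Mu [] [V], Ph [] []]"
    by (rule diagram_rewrite[where i = 0 and p = "[]" and s = "[]", OF cocycle_diagram[symmetric]])
      (simp_all add: layer_homs)
  also have "\<dots> = diagram_arr C [Sg [] [V], Ph [] [V], Ph [V] [], Sg [] [A], Ps [A] [], Mu [] [V], Ph [] []]"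
    by (rule diagram_rewrite[where i = 1 and p = "[]" and s = "[]", OF twisted_via_phi_phi[symmetric]])
      (simp_all add: layer_homs)
  also have "\<dots> = diagram_arr C [Sg [] [V], Ph [] [V], Ph [V] [], Sg [] [A], Ph [] [A], Mu [V] []]"
    by (rule diagram_rewrite[where i = 4 and p = "[]" and s = "[]", OF phi_mu_via_psi[symmetric]])
      (simp_all add: layer_homs)
  also have "\<dots> = diagram_arr C [Sp [] [V], Ph [V] [], Sg [] [A], Ph [] [A], Mu [V] []]"
    by (rule diagram_rewrite[where i = 0 and p = "[]" and s = "[V]", OF sigmaVA_split[symmetric]])
      (simp_all add: layer_homs)
  also have "\<dots> = diagram_arr C [Sp [] [V], Ph [V] [], Sp [] [A], Mu [V] []]"
    by (rule diagram_rewrite[where i = 2 and p = "[]" and s = "[A]", OF sigmaVA_split[symmetric]])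
      (simp_all add: layer_homs)
  also have "\<dots> = Cmp C (TM C (Id C V) mu) (Cmp C (TM C (Cmp C phi sigma) (Id C A))
       (Cmp C (TM C (Id C V) phi) (TM C (Cmp C phi sigma) (Id C V))))"
    by (simp add: layer_eval)
  finally show ?thesis .
qed

lemma muVA_diagram:
  "muVA C A V mu phi (Cmp C phi sigma) = diagram_arr C [Ph [V] [A], Sp [] [A, A], Mu [V, A] [], Mu [V] []]"
proof -
  have sigma_mu: "diagram_arr C [Sp [] [A, A], Mu [V, A] []] = TM C (Cmp C phi sigma) mu"
    by (simp add: layer_eval tensor_sigmaVA_mu)
  have inner: "diagram_arr C ([Ph [V] [A]] @ [Sp [] [A, A], Mu [V, A] []])
      = Cmp C (TM C (Cmp C phi sigma) mu) (TM C (Id C V) (TM C phi (Id C A)))"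
    by (rule diagram_arr_appendI[OF _ _ _ _ sigma_mu]) (simp_all add: layer_homs layer_eval)
  have "diagram_arr C (([Ph [V] [A]] @ [Sp [] [A, A], Mu [V, A] []]) @ [Mu [V] []])
      = muVA C A V mu phi (Cmp C phi sigma)"
    unfolding muVA_def
    by (rule diagram_arr_appendI[OF _ _ _ inner]) (simp_all add: layer_homs layer_eval)
  then show ?thesis by simp
qed

lemma muAV_conjugate_diagram:
  "Cmp C phi (Cmp C (muAV C A V mu psi sigma) (TM C psi psi))
   = diagram_arr C [Ps [] [V, A], Ps [A, V] [], Ps [A] [V], Sg [A, A] [], Mu [] [A, V], Mu [] [V], Ph [] []]"
proof -
  define M where "M = ([Ps [A] [V]] @ [Sg [A, A] [], Mu [] [A, V]]) @ [Mu [] [V]]"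
  have psi_psi: "diagram_arr C [Ps [] [V, A], Ps [A, V] []] = TM C psi psi"
    by (simp add: layer_eval tensor_psi_psi)
  have mu_sigma: "diagram_arr C [Sg [A, A] [], Mu [] [A, V]] = TM C mu sigma"
    by (simp add: layer_eval tensor_mu_sigma)
  have inner: "diagram_arr C ([Ps [A] [V]] @ [Sg [A, A] [], Mu [] [A, V]])
      = Cmp C (TM C mu sigma) (TM C (Id C A) (TM C psi (Id C V)))"
    by (rule diagram_arr_appendI[OF _ _ _ _ mu_sigma]) (simp_all add: layer_homs layer_eval)
  have muAV: "diagram_arr C M = muAV C A V mu psi sigma"
    unfolding muAV_def M_def
    by (rule diagram_arr_appendI[OF _ _ _ inner]) (simp_all add: layer_homs layer_eval)
  have product: "diagram_arr C ([Ps [] [V, A], Ps [A, V] []] @ M) = Cmp C (muAV C A V mu psi sigma) (TM C psi psi)"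
    by (rule diagram_arr_appendI[OF _ _ _ psi_psi muAV]) (simp_all add: layer_homs M_def)
  have "diagram_arr C (([Ps [] [V, A], Ps [A, V] []] @ M) @ [Ph [] []])
      = Cmp C phi (Cmp C (muAV C A V mu psi sigma) (TM C psi psi))"
    by (rule diagram_arr_appendI[OF _ _ _ product]) (simp_all add: layer_homs layer_eval M_def)
  then show ?thesis by (simp add: M_def)
qed

lemma muVA_conjugate:
  "muVA C A V mu phi (Cmp C phi sigma) = Cmp C phi (Cmp C (muAV C A V mu psi sigma) (TM C psi psi))"
proof -
  have "diagram_arr C [Ph [V] [A], Sp [] [A, A], Mu [V, A] [], Mu [V] []]
      = diagram_arr C [Ph [V] [A], Sg [] [A, A], Ph [] [A, A], Mu [V, A] [], Mu [V] []]"
    by (rule diagram_rewrite[where i = 1 and p = "[]" and s = "[A, A]", OF sigmaVA_split])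
      (simp_all add: layer_homs)
  also have "\<dots> = diagram_arr C [Ph [V] [A], Sg [] [A, A], Ph [] [A, A], Mu [V] [A], Mu [V] []]"
    by (rule diagram_rewrite[where i = 3 and p = "[V]" and s = "[]", OF mu_assoc_diagram[symmetric]])
      (simp_all add: layer_homs)
  also have "\<dots> = diagram_arr C [Ph [V] [A], Sg [] [A, A], Ps [A] [A], Mu [] [V, A], Ph [] [A], Mu [V] []]"
    by (rule diagram_rewrite[where i = 2 and p = "[]" and s = "[A]", OF phi_mu_via_psi])
      (simp_all add: layer_homs)
  also have "\<dots> = diagram_arr C [Ph [V] [A], Sg [] [A, A], Ps [A] [A], Mu [] [V, A], Ps [A] [], Mu [] [V], Ph [] []]"
    by (rule diagram_rewrite[where i = 4 and p = "[]" and s = "[]", OF phi_mu_via_psi])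
      (simp_all add: layer_homs)
  also have "\<dots> = diagram_arr C [Ps [] [V, A], Sg [A] [A], Mu [] [V, A], Ps [A] [], Mu [] [V], Ph [] []]"
    by (rule diagram_rewrite[where i = 0 and p = "[]" and s = "[A]", OF twisted_via_phi])
      (simp_all add: layer_homs)
  also have "\<dots> = diagram_arr C [Ps [] [V, A], Sg [A] [A], Ps [A, A] [], Mu [] [A, V], Mu [] [V], Ph [] []]"
    by (rule diagram_swap[where i = 2]) (simp_all add: layer_homs)
  also have "\<dots> = diagram_arr C [Ps [] [V, A], Sg [A] [A], Ps [A, A] [], Mu [A] [V], Mu [] [V], Ph [] []]"
    by (rule diagram_rewrite[where i = 3 and p = "[]" and s = "[V]", OF mu_assoc_diagram])
      (simp_all add: layer_homs)
  also have "\<dots> = diagram_arr C [Ps [] [V, A], Ps [A, V] [], Ps [A] [V], Sg [A, A] [], Mu [A] [V], Mu [] [V], Ph [] []]"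
    by (rule diagram_rewrite[where i = 1 and p = "[A]" and s = "[]", OF twisted_diagram])
      (simp_all add: layer_homs)
  also have "\<dots> = diagram_arr C [Ps [] [V, A], Ps [A, V] [], Ps [A] [V], Sg [A, A] [], Mu [] [A, V], Mu [] [V], Ph [] []]"
    by (rule diagram_rewrite[where i = 4 and p = "[]" and s = "[V]", OF mu_assoc_diagram[symmetric]])
      (simp_all add: layer_homs)
  finally show ?thesis
    by (simp add: muVA_diagram muAV_conjugate_diagram)
qed

lemma nablaVA_eta_diagram:
  "Cmp C (nablaVA C A V eta mu phi) (TM C (Id C V) eta)
   = diagram_arr C [Et [V] [], Et [] [V, A], Ph [] [A], Mu [V] []]"
proof -
  have "diagram_arr C ([Et [V] []] @ [Et [] [V, A], Ph [] [A], Mu [V] []])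
      = Cmp C (nablaVA C A V eta mu phi) (TM C (Id C V) eta)"
    by (subst diagram_arr_append) (simp_all add: layer_homs layer_eval nablaVA_diagram)
  then show ?thesis by simp
qed

context
  fixes nu :: 'm
  assumes nu_hom: "nu \<in> Hom C (Unit C) (TO C A V)"
    and preunit_psi:
      "Cmp C (TM C mu (Id C V)) (Cmp C (TM C (Id C A) sigma) (Cmp C (TM C psi (Id C V)) (TM C (Id C V) nu)))
       = Cmp C (nablaAV C A V eta mu psi) (TM C eta (Id C V))"
    and preunit_sigma:
      "Cmp C (TM C mu (Id C V)) (Cmp C (TM C (Id C A) sigma) (TM C nu (Id C V)))
       = Cmp C (nablaAV C A V eta mu psi) (TM C eta (Id C V))"
    and preunit_beta:
      "Cmp C (TM C mu (Id C V)) (Cmp C (TM C (Id C A) psi) (TM C nu (Id C A))) = betaAV C A V mu nu"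
begin

abbreviation "Nu l r \<equiv> (l, nu, [], [A, V], r)"
abbreviation "Np l r \<equiv> (l, Cmp C phi nu, [], [V, A], r)"

lemma preunitVA_hom: "Cmp C phi nu \<in> Hom C (Unit C) (TO C V A)"
  using comp_hom[OF nu_hom phi_hom] .

lemma is_arr_preunits: "is_arr C nu" "is_arr C (Cmp C phi nu)"
  using nu_hom preunitVA_hom by (auto intro: is_arrI)

lemma preunitVA_split: "diagram_arr C [Np [] []] = diagram_arr C [Nu [] [], Ph [] []]"
  by (simp add: layer_eval is_arr_preunits)

lemma nablaAV_eta_diagram:
  "Cmp C (nablaAV C A V eta mu psi) (TM C eta (Id C V))
   = diagram_arr C [Et [] [V], Et [A, V] [], Ps [A] [], Mu [] [V]]"
proof -
  have "diagram_arr C ([Et [] [V]] @ [Et [A, V] [], Ps [A] [], Mu [] [V]])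
      = Cmp C (nablaAV C A V eta mu psi) (TM C eta (Id C V))"
    by (subst diagram_arr_append) (simp_all add: layer_homs layer_eval nablaAV_diagram)
  then show ?thesis by simp
qed

lemma preunit_psi_diagram:
  "diagram_arr C [Nu [V] [], Ps [] [V], Sg [A] [], Mu [] [V]]
   = diagram_arr C [Et [] [V], Et [A, V] [], Ps [A] [], Mu [] [V]]"
  using preunit_psi unfolding nablaAV_eta_diagram by (simp add: layer_eval is_arr_preunits)

lemma preunit_sigma_diagram:
  "diagram_arr C [Nu [] [V], Sg [A] [], Mu [] [V]]
   = diagram_arr C [Et [] [V], Et [A, V] [], Ps [A] [], Mu [] [V]]"
  using preunit_sigma unfolding nablaAV_eta_diagram by (simp add: layer_eval is_arr_preunits)

lemma preunit_beta_diagram: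
  "diagram_arr C [Nu [] [A], Ps [A] [], Mu [] [V]] = diagram_arr C [Nu [A] [], Mu [] [V]]"
  using preunit_beta by (simp add: layer_eval is_arr_preunits betaAV_def)

lemma preunit_psi_VA:
  "Cmp C (TM C (Id C V) mu) (Cmp C (TM C (Cmp C phi sigma) (Id C A))
     (Cmp C (TM C (Id C V) phi) (TM C (Cmp C phi nu) (Id C V))))
   = Cmp C (nablaVA C A V eta mu phi) (TM C (Id C V) eta)"
proof -
  have "Cmp C (TM C (Id C V) mu) (Cmp C (TM C (Cmp C phi sigma) (Id C A))
          (Cmp C (TM C (Id C V) phi) (TM C (Cmp C phi nu) (Id C V))))
      = diagram_arr C [Np [] [V], Ph [V] [], Sp [] [A], Mu [V] []]"
    by (simp add: layer_eval is_arr_preunits)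
  also have "\<dots> = diagram_arr C [Np [] [V], Ph [V] [], Sg [] [A], Ph [] [A], Mu [V] []]"
    by (rule diagram_rewrite[where i = 2 and p = "[]" and s = "[A]", OF sigmaVA_split])
      (simp_all add: layer_homs preunitVA_hom)
  also have "\<dots> = diagram_arr C [Nu [] [V], Ph [] [V], Ph [V] [], Sg [] [A], Ph [] [A], Mu [V] []]"
    by (rule diagram_rewrite[where i = 0 and p = "[]" and s = "[V]", OF preunitVA_split])
      (simp_all add: layer_homs preunitVA_hom nu_hom)
  also have "\<dots> = diagram_arr C [Nu [] [V], Ph [] [V], Ph [V] [], Sg [] [A], Ps [A] [], Mu [] [V], Ph [] []]"
    by (rule diagram_rewrite[where i = 4 and p = "[]" and s = "[]", OF phi_mu_via_psi])
      (simp_all add: layer_homs nu_hom)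
  also have "\<dots> = diagram_arr C [Nu [] [V], Sg [A] [], Mu [] [V], Ph [] []]"
    by (rule diagram_rewrite[where i = 1 and p = "[]" and s = "[]", OF twisted_via_phi_phi])
      (simp_all add: layer_homs nu_hom)
  also have "\<dots> = diagram_arr C [Et [] [V], Et [A, V] [], Ps [A] [], Mu [] [V], Ph [] []]"
    by (rule diagram_rewrite[where i = 0 and p = "[]" and s = "[]", OF preunit_sigma_diagram])
      (simp_all add: layer_homs nu_hom)
  also have "\<dots> = diagram_arr C [Et [] [V], Ph [] []]"
    by (rule diagram_rewrite[where i = 1 and p = "[]" and s = "[]", OF phi_after_nablaAV])
      (simp_all add: layer_homs)
  also have "\<dots> = Cmp C (nablaVA C A V eta mu phi) (TM C (Id C V) eta)"
    by (simp add: nablaVA_after_eta nablaVA_eta_diagram)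
  finally show ?thesis .
qed

lemma preunit_sigma_VA:
  "Cmp C (TM C (Id C V) mu) (Cmp C (TM C (Cmp C phi sigma) (Id C A)) (TM C (Id C V) (Cmp C phi nu)))
   = Cmp C (nablaVA C A V eta mu phi) (TM C (Id C V) eta)"
proof -
  have "Cmp C (TM C (Id C V) mu) (Cmp C (TM C (Cmp C phi sigma) (Id C A)) (TM C (Id C V) (Cmp C phi nu)))
      = diagram_arr C [Np [V] [], Sp [] [A], Mu [V] []]"
    by (simp add: layer_eval is_arr_preunits)
  also have "\<dots> = diagram_arr C [Np [V] [], Sg [] [A], Ph [] [A], Mu [V] []]"
    by (rule diagram_rewrite[where i = 1 and p = "[]" and s = "[A]", OF sigmaVA_split])
      (simp_all add: layer_homs preunitVA_hom)
  also have "\<dots> = diagram_arr C [Nu [V] [], Ph [V] [], Sg [] [A], Ph [] [A], Mu [V] []]"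
    by (rule diagram_rewrite[where i = 0 and p = "[V]" and s = "[]", OF preunitVA_split])
      (simp_all add: layer_homs preunitVA_hom nu_hom)
  also have "\<dots> = diagram_arr C [Nu [V] [], Ph [V] [], Sg [] [A], Ps [A] [], Mu [] [V], Ph [] []]"
    by (rule diagram_rewrite[where i = 3 and p = "[]" and s = "[]", OF phi_mu_via_psi])
      (simp_all add: layer_homs nu_hom)
  also have "\<dots> = diagram_arr C [Nu [V] [], Ps [] [V], Sg [A] [], Mu [] [V], Ph [] []]"
    by (rule diagram_rewrite[where i = 1 and p = "[]" and s = "[]", OF twisted_via_phi])
      (simp_all add: layer_homs nu_hom)
  also have "\<dots> = diagram_arr C [Et [] [V], Et [A, V] [], Ps [A] [], Mu [] [V], Ph [] []]"
    by (rule diagram_rewrite[where i = 0 and p = "[]" and s = "[]", OF preunit_psi_diagram])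
      (simp_all add: layer_homs nu_hom)
  also have "\<dots> = diagram_arr C [Et [] [V], Ph [] []]"
    by (rule diagram_rewrite[where i = 1 and p = "[]" and s = "[]", OF phi_after_nablaAV])
      (simp_all add: layer_homs)
  also have "\<dots> = Cmp C (nablaVA C A V eta mu phi) (TM C (Id C V) eta)"
    by (simp add: nablaVA_after_eta nablaVA_eta_diagram)
  finally show ?thesis .
qed

lemma preunit_beta_VA:
  "Cmp C (TM C (Id C V) mu) (Cmp C (TM C phi (Id C A)) (TM C (Id C A) (Cmp C phi nu)))
   = Cmp C (TM C (Id C V) mu) (TM C (Cmp C phi nu) (Id C A))"
proof -
  have "Cmp C (TM C (Id C V) mu) (Cmp C (TM C phi (Id C A)) (TM C (Id C A) (Cmp C phi nu)))
      = diagram_arr C [Np [A] [], Ph [] [A], Mu [V] []]"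
    by (simp add: layer_eval is_arr_preunits)
  also have "\<dots> = diagram_arr C [Nu [A] [], Ph [A] [], Ph [] [A], Mu [V] []]"
    by (rule diagram_rewrite[where i = 0 and p = "[A]" and s = "[]", OF preunitVA_split])
      (simp_all add: layer_homs preunitVA_hom nu_hom)
  also have "\<dots> = diagram_arr C [Nu [A] [], Mu [] [V], Ph [] []]"
    by (rule diagram_rewrite[where i = 1 and p = "[]" and s = "[]", OF phi_compat_diagram])
      (simp_all add: layer_homs nu_hom)
  also have "\<dots> = diagram_arr C [Nu [] [A], Ps [A] [], Mu [] [V], Ph [] []]"
    by (rule diagram_rewrite[where i = 0 and p = "[]" and s = "[]", OF preunit_beta_diagram[symmetric]])
      (simp_all add: layer_homs nu_hom)
  also have "\<dots> = diagram_arr C [Nu [] [A], Ph [] [A], Mu [V] []]"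
    by (rule diagram_rewrite[where i = 1 and p = "[]" and s = "[]", OF phi_mu_via_psi[symmetric]])
      (simp_all add: layer_homs nu_hom)
  also have "\<dots> = diagram_arr C [Np [] [A], Mu [V] []]"
    by (rule diagram_rewrite[where i = 0 and p = "[]" and s = "[A]", OF preunitVA_split[symmetric]])
      (simp_all add: layer_homs preunitVA_hom nu_hom)
  also have "\<dots> = Cmp C (TM C (Id C V) mu) (TM C (Cmp C phi nu) (Id C A))"
    by (simp add: layer_eval is_arr_preunits)
  finally show ?thesis .
qed

end

end

theorem proposition1p10:
  fixes C :: "('o, 'm) smcat"
    and A V :: 'o and eta mu psiVA sigmaVA psiAV :: 'm
  assumes smc: "strict_monoidal_category C"
    and split: "idempotents_split C"
    and wcp: "weak_crossed_product C A V eta mu psiVA sigmaVA"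
    and psiAV_hom: "psiAV \<in> Hom C (TO C A V) (TO C V A)"
    and psiAV_compat:
      "Cmp C (TM C (Id C V) mu) (Cmp C (TM C psiAV (Id C A)) (TM C (Id C A) psiAV))
         = Cmp C psiAV (TM C mu (Id C V))"
    and inv1: "Cmp C psiVA psiAV = nablaAV C A V eta mu psiVA"
    and inv2: "Cmp C psiAV psiVA = nablaVA C A V eta mu psiAV"
  shows
    "Cmp C (nablaVA C A V eta mu psiAV) (Cmp C psiAV sigmaVA) = Cmp C psiAV sigmaVA
     \<and>
     Cmp C (TM C (Id C V) mu) (Cmp C (TM C (Cmp C psiAV sigmaVA) (Id C A))
        (Cmp C (TM C (Id C V) psiAV) (TM C psiAV (Id C V))))
       = Cmp C (TM C (Id C V) mu) (Cmp C (TM C psiAV (Id C A)) (TM C (Id C A) (Cmp C psiAV sigmaVA)))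
     \<and>
     Cmp C (TM C (Id C V) mu) (Cmp C (TM C (Cmp C psiAV sigmaVA) (Id C A))
        (TM C (Id C V) (Cmp C psiAV sigmaVA)))
       = Cmp C (TM C (Id C V) mu) (Cmp C (TM C (Cmp C psiAV sigmaVA) (Id C A))
           (Cmp C (TM C (Id C V) psiAV) (TM C (Cmp C psiAV sigmaVA) (Id C V))))
     \<and>
     muVA C A V mu psiAV (Cmp C psiAV sigmaVA)
       = Cmp C psiAV (Cmp C (muAV C A V mu psiVA sigmaVA) (TM C psiVA psiVA))
     \<and>
     (\<forall>nu. wcp_preunit C A V eta mu psiVA sigmaVA nu \<longrightarrow>
        Cmp C (TM C (Id C V) mu) (Cmp C (TM C (Cmp C psiAV sigmaVA) (Id C A))
           (Cmp C (TM C (Id C V) psiAV) (TM C (Cmp C psiAV nu) (Id C V))))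
          = Cmp C (nablaVA C A V eta mu psiAV) (TM C (Id C V) eta)
        \<and>
        Cmp C (TM C (Id C V) mu) (Cmp C (TM C (Cmp C psiAV sigmaVA) (Id C A))
           (TM C (Id C V) (Cmp C psiAV nu)))
          = Cmp C (nablaVA C A V eta mu psiAV) (TM C (Id C V) eta)
        \<and>
        Cmp C (TM C (Id C V) mu) (Cmp C (TM C psiAV (Id C A)) (TM C (Id C A) (Cmp C psiAV nu)))
          = Cmp C (TM C (Id C V) mu) (TM C (Cmp C psiAV nu) (Id C A)))"
proof -
  have alg: "algebra C A eta mu" and V_obj: "V \<in> Obj C"
    and wcp_axioms: "psiVA \<in> Hom C (TO C V A) (TO C A V)" "sigmaVA \<in> Hom C (TO C V V) (TO C A V)"
      "psi_compat C A V mu psiVA" "Cmp C (nablaAV C A V eta mu psiVA) sigmaVA = sigmaVA"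
      "twistedAV C A V mu psiVA sigmaVA" "cocycleAV C A V mu psiVA sigmaVA"
    using wcp unfolding weak_crossed_product_def by auto
  interpret wcp_transposition C A V eta mu psiVA psiAV sigmaVA
    using smc alg V_obj wcp_axioms psiAV_hom psiAV_compat inv1 inv2
    by unfold_locales (auto simp: algebra_def)
  show ?thesis
    unfolding wcp_preunit_def
    using nablaVA_sigmaVA twisted_VA cocycle_VA muVA_conjugate
      preunit_psi_VA preunit_sigma_VA preunit_beta_VA
    by blast
qed

end
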